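(* Let $Z_1,\dots,Z_m$ be $n\times n$ complex matrices such that the singular values $r_{i1},\dots,r_{in}$ of $Z_i$ satisfy $0\le r_{ik}<1$ for all $i,k$. Let $U$ be an $n\times n$ unitary matrix and $w_1,\dots,w_m>0$ with $\sum_{i=1}^m w_i=1$. Then $$\frac{\det\big(I-\sum_{i=1}^m w_iZ_i^*Z_i\big)}{\big|\det(I-U\sum_{i=1}^m w_i|Z_i|)\big|^2}\le \prod_{k=1}^n\prod_{i=1}^m\left(\frac{1+r_{ik}}{1-r_{ik}}\right)^{w_i}.$$ Equality holds if and only if all $|Z_i|$ equal a common matrix $Z$ and the spectrum of $UZ$ (with multiplicities) equals that of $Z$ (in which case $U=I$ if $Z$ is nonsingular).
   Context: $Z^*$ denotes the conjugate transpose; $|Z|=(Z^*Z)^{1/2}$ is the positive semidefinite square root of $Z^*Z$; $I$ is the $n\times n$ identity matrix. *)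

theory Defs
  imports "Jordan_Normal_Form.Char_Poly"
begin

definition adj_mat :: "complex mat \<Rightarrow> complex mat" where
  "adj_mat A = mat (dim_col A) (dim_row A) (\<lambda>(i,j). cnj (A $$ (j,i)))"

definition unitary_mat :: "nat \<Rightarrow> complex mat \<Rightarrow> bool" where
  "unitary_mat n U \<longleftrightarrow> U \<in> carrier_mat n n \<and> adj_mat U * U = 1\<^sub>m n"

definition psd_mat :: "nat \<Rightarrow> complex mat \<Rightarrow> bool" where
  "psd_mat n P \<longleftrightarrow> P \<in> carrier_mat n n \<and> adj_mat P = P \<and>
     (\<forall>v \<in> carrier_vec n. 0 \<le> Re (map_vec cnj v \<bullet> (P *\<^sub>v v)))"

definition abs_mat :: "complex mat \<Rightarrow> complex mat" where
  "abs_mat Z = (THE P. psd_mat (dim_col Z) P \<and> P * P = adj_mat Z * Z)"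

definition wsum_mat :: "nat \<Rightarrow> nat \<Rightarrow> (nat \<Rightarrow> real) \<Rightarrow> (nat \<Rightarrow> complex mat) \<Rightarrow> complex mat" where
  "wsum_mat n m w A = mat n n (\<lambda>(j,l). \<Sum>i<m. complex_of_real (w i) * A i $$ (j,l))"

end

theory Submission
  imports Defs "Jordan_Normal_Form.Schur_Decomposition" "HOL-Analysis.Convex"
begin

text \<open>
  Let \<open>P\<^sub>i = |Z\<^sub>i|\<close>, \<open>W = \<Sum>\<^sub>i w\<^sub>i P\<^sub>i\<close>, and let \<open>s\<^sub>1, \<dots>, s\<^sub>n \<in> [0, 1)\<close> be the eigenvalues of \<open>W\<close>.
  Three estimates combine.
  (1) \<open>|det (I - U W)| \<ge> \<Prod>\<^sub>k (1 - s\<^sub>k)\<close>, with equality only if \<open>U W = W\<close>: diagonalise \<open>W\<close> and raise its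
  eigenvalues from \<open>0\<close> one at a time; by Cramer's rule each step multiplies the determinant by some
  \<open>1 - s\<^sub>k x\<^sub>k\<close> with \<open>|x\<^sub>k| \<le> 1\<close>, because \<open>U\<close> is an isometry.
  (2) \<open>\<Sum>\<^sub>i w\<^sub>i Z\<^sub>i\<^sup>* Z\<^sub>i - W\<^sup>2 = \<Sum>\<^sub>i w\<^sub>i (P\<^sub>i - W)\<^sup>2 \<ge> 0\<close>, so by monotonicity of the determinant on positive
  definite matrices \<open>det (I - \<Sum>\<^sub>i w\<^sub>i Z\<^sub>i\<^sup>* Z\<^sub>i) \<le> det (I - W\<^sup>2) = \<Prod>\<^sub>k (1 - s\<^sub>k\<^sup>2)\<close>, with equality only if all
  \<open>P\<^sub>i = W\<close>.
  (3) If \<open>V\<^sub>i\<close> and \<open>V\<close> diagonalise \<open>P\<^sub>i\<close> and \<open>W\<close>, the \<open>s\<^sub>k\<close> are averages of the \<open>r\<^sub>i\<^sub>j\<close> with weights \<open>w\<^sub>i\<close> and doubly stochastic matrices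
  \<open>|(V\<^sub>i\<^sup>* V)\<^sub>j\<^sub>k|\<^sup>2\<close>, so convexity of \<open>g t = log ((1 + t) / (1 - t))\<close> on \<open>[0, 1)\<close> gives
  \<open>\<Sum>\<^sub>k g s\<^sub>k \<le> \<Sum>\<^sub>i w\<^sub>i \<Sum>\<^sub>k g r\<^sub>i\<^sub>k\<close>.
  Hence the left-hand side is at most \<open>\<Prod>\<^sub>k (1 + s\<^sub>k) / (1 - s\<^sub>k) = exp (\<Sum>\<^sub>k g s\<^sub>k)\<close>, which is at most the
  right-hand side.
\<close>

section \<open>Adjoints and unitary matrices\<close>

lemma cnj_mult_self_eq_cmod_sq: "cnj z * z = complex_of_real ((cmod z)^2)"
  by (metis complex_norm_square mult.commute of_real_power)

lemma prod_uminus_nat: "(\<Prod>k<n. - (f k :: 'a :: comm_ring_1)) = (-1)^n * (\<Prod>k<n. f k)"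
  by (induction n, auto)

lemma row_scalar_prod_eq_sum: assumes "X \<in> carrier_mat m n" "w \<in> carrier_vec n" "i < m"
  shows "row X i \<bullet> w = (\<Sum>k<n. X $$ (i,k) * w $ k)"
  using assms by (simp add: scalar_prod_def atLeast0LessThan)

lemma mult_mat_vec_index_sum: assumes "X \<in> carrier_mat m n" "w \<in> carrier_vec n" "i < m"
  shows "(X *\<^sub>v w) $ i = (\<Sum>k<n. X $$ (i,k) * w $ k)"
  using assms by (simp add: row_scalar_prod_eq_sum)

lemma mult_mat_vec_unit_vec_index: assumes "(A :: complex mat) \<in> carrier_mat m n" "i < m" "j < n"
  shows "(A *\<^sub>v unit_vec n j) $ i = A $$ (i,j)"
proof -
  have "(A *\<^sub>v unit_vec n j) $ i = row A i \<bullet> unit_vec n j" using assms by simp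
  also have "\<dots> = (row A i) $ j" using assms scalar_prod_right_unit[of j n "row A i"] by simp
  also have "\<dots> = A $$ (i,j)" using assms by simp
  finally show ?thesis .
qed

lemma mult_mat_vec_zero: "V \<in> carrier_mat m n \<Longrightarrow> V *\<^sub>v 0\<^sub>v n = (0\<^sub>v m :: complex vec)"
  by (intro eq_vecI, auto simp: row_scalar_prod_eq_sum[of V m n])

lemma zero_mat_vec: "v \<in> carrier_vec k \<Longrightarrow> 0\<^sub>m n k *\<^sub>v v = (0\<^sub>v n :: complex vec)"
  by (intro eq_vecI, auto simp: row_scalar_prod_eq_sum[of "0\<^sub>m n k" n k])

lemma smult_one_mat_mult_vec: assumes "x \<in> carrier_vec n"
  shows "(c \<cdot>\<^sub>m 1\<^sub>m n) *\<^sub>v x = c \<cdot>\<^sub>v (x :: complex vec)"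
proof (rule eq_vecI)
  fix i assume "i < dim_vec (c \<cdot>\<^sub>v x)" hence i: "i < n" using assms by simp
  have "((c \<cdot>\<^sub>m 1\<^sub>m n) *\<^sub>v x) $ i = (\<Sum>k<n. (c \<cdot>\<^sub>m 1\<^sub>m n) $$ (i,k) * x $ k)"
    using assms i by (intro mult_mat_vec_index_sum, auto)
  also have "\<dots> = (\<Sum>k<n. if i = k then c * x $ k else 0)" using i by (intro sum.cong refl, auto)
  also have "\<dots> = c * x $ i" using i by simp
  finally show "((c \<cdot>\<^sub>m 1\<^sub>m n) *\<^sub>v x) $ i = (c \<cdot>\<^sub>v x) $ i" using i assms by simp
qed (use assms in simp)

lemma minus_eq_zero_mat_imp_eq: assumes "X \<in> carrier_mat n n" "Y \<in> carrier_mat n n" "Y - X = 0\<^sub>m n n"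
  shows "X = (Y :: complex mat)"
proof (rule eq_matI)
  fix i j assume "i < dim_row Y" "j < dim_col Y"
  hence i: "i < n" and j: "j < n" using assms by auto
  have "(Y - X) $$ (i,j) = 0" using assms(3) i j by simp
  hence "Y $$ (i,j) - X $$ (i,j) = 0" using assms(1,2) i j by simp
  thus "X $$ (i,j) = Y $$ (i,j)" by simp
qed (use assms in auto)

lemma mult_mult_carrier_mat: "V \<in> carrier_mat n n \<Longrightarrow> D \<in> carrier_mat n n \<Longrightarrow> W \<in> carrier_mat n n
  \<Longrightarrow> V * D * W \<in> carrier_mat n n"
  by (meson mult_carrier_mat)

lemma assoc_mult_mat4: assumes "X \<in> carrier_mat n n" "Y \<in> carrier_mat n n" "A \<in> carrier_mat n n" "Z \<in> carrier_mat n n"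
  shows "X * (Y * A * Z) = (X * Y) * A * Z"
proof -
  have YA: "Y * A \<in> carrier_mat n n" using assms by simp
  have XY: "X * Y \<in> carrier_mat n n" using assms by simp
  have "X * (Y * A * Z) = X * (Y * A) * Z" using assoc_mult_mat[OF assms(1) YA assms(4)] by simp
  also have "X * (Y * A) = X * Y * A" using assoc_mult_mat[OF assms(1) assms(2) assms(3)] by simp
  finally show ?thesis .
qed

lemma assoc_mult_mat5: assumes "X \<in> carrier_mat n n" "Y \<in> carrier_mat n n" "A \<in> carrier_mat n n"
  "Z \<in> carrier_mat n n" "W \<in> carrier_mat n n"
  shows "(X * Y) * A * (Z * W) = X * (Y * A * Z) * W"
proof -
  have "(X * Y) * A * (Z * W) = X * (Y * (A * (Z * W)))"
    using assms by (simp add: assoc_mult_mat[of _ n n _ n _ n])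
  also have "Y * (A * (Z * W)) = (Y * A * Z) * W"
    using assms by (simp add: assoc_mult_mat[of _ n n _ n _ n])
  also have "X * \<dots> = X * (Y * A * Z) * W"
    using assms by (simp add: assoc_mult_mat[of _ n n _ n _ n])
  finally show ?thesis .
qed

lemma adj_mat_dim[simp]: "dim_row (adj_mat A) = dim_col A" "dim_col (adj_mat A) = dim_row A"
  by (auto simp: adj_mat_def)

lemma adj_mat_index[simp]: "i < dim_col A \<Longrightarrow> j < dim_row A \<Longrightarrow> adj_mat A $$ (i,j) = cnj (A $$ (j,i))"
  by (auto simp: adj_mat_def)

lemma adj_mat_carrier[simp]: "A \<in> carrier_mat m n \<Longrightarrow> adj_mat A \<in> carrier_mat n m"
  unfolding carrier_mat_def by simp

lemma adj_mat_adj_mat[simp]: "adj_mat (adj_mat A) = A"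
  by (rule eq_matI, auto)

lemma adj_mat_mult: assumes "A \<in> carrier_mat m n" "B \<in> carrier_mat n p"
  shows "adj_mat (A * B) = adj_mat B * adj_mat A"
proof (rule eq_matI)
  fix i j assume "i < dim_row (adj_mat B * adj_mat A)" "j < dim_col (adj_mat B * adj_mat A)"
  hence i: "i < p" and j: "j < m" using assms by auto
  have "adj_mat (A * B) $$ (i,j) = cnj (\<Sum>k\<in>{0..<n}. A $$ (j,k) * B $$ (k,i))"
    using assms i j by (simp add: scalar_prod_def)
  also have "\<dots> = (\<Sum>k\<in>{0..<n}. cnj (B $$ (k,i)) * cnj (A $$ (j,k)))"
    by (simp add: mult.commute)
  also have "\<dots> = (adj_mat B * adj_mat A) $$ (i,j)"
    using assms i j by (simp add: scalar_prod_def)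
  finally show "adj_mat (A * B) $$ (i,j) = (adj_mat B * adj_mat A) $$ (i,j)" .
qed (use assms in auto)

lemma adj_mat_add: assumes "A \<in> carrier_mat m n" "B \<in> carrier_mat m n"
  shows "adj_mat (A + B) = adj_mat A + adj_mat B"
  using assms by (intro eq_matI, auto)

lemma adj_mat_minus: assumes "A \<in> carrier_mat m n" "B \<in> carrier_mat m n"
  shows "adj_mat (A - B) = adj_mat A - adj_mat B"
  using assms by (intro eq_matI, auto)

lemma adj_mat_one[simp]: "adj_mat (1\<^sub>m n) = 1\<^sub>m n"
  by (intro eq_matI, auto)

lemma adj_mat_four_block:
  assumes "A \<in> carrier_mat a a'" "B \<in> carrier_mat a b'" "C \<in> carrier_mat b a'" "D \<in> carrier_mat b b'"
  shows "adj_mat (four_block_mat A B C D) = four_block_mat (adj_mat A) (adj_mat C) (adj_mat B) (adj_mat D)"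
  using assms by (intro eq_matI, auto)

interpretation cnj_hom: comm_ring_hom cnj
  by (unfold_locales, auto)

lemma det_adj_mat: assumes "A \<in> carrier_mat n n" shows "det (adj_mat A) = cnj (det A)"
proof -
  have "adj_mat A = transpose_mat (map_mat cnj A)"
    using assms by (intro eq_matI, auto)
  then show ?thesis using assms by (simp add: det_transpose)
qed

lemma unitary_mat_carrier: "unitary_mat n U \<Longrightarrow> U \<in> carrier_mat n n"
  by (simp add: unitary_mat_def)

lemma unitary_mat_adj_mult: "unitary_mat n U \<Longrightarrow> adj_mat U * U = 1\<^sub>m n"
  by (simp add: unitary_mat_def)

lemma unitary_mat_mult_adj: "unitary_mat n U \<Longrightarrow> U * adj_mat U = 1\<^sub>m n"
  unfolding unitary_mat_def using mat_mult_left_right_inverse[of "adj_mat U" n U]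
  by auto

lemma unitary_mat_adj: "unitary_mat n U \<Longrightarrow> unitary_mat n (adj_mat U)"
  using unitary_mat_mult_adj[of n U] unfolding unitary_mat_def by auto

lemma unitary_mat_mult: assumes "unitary_mat n U" "unitary_mat n V"
  shows "unitary_mat n (U * V)"
proof -
  have U: "U \<in> carrier_mat n n" and V: "V \<in> carrier_mat n n" using assms unitary_mat_carrier by auto
  have "adj_mat (U * V) * (U * V) = adj_mat V * (adj_mat U * (U * V))"
    using U V by (simp add: adj_mat_mult assoc_mult_mat[of _ n n _ n _ n])
  also have "adj_mat U * (U * V) = (adj_mat U * U) * V"
    using U V by (simp add: assoc_mult_mat[of _ n n _ n _ n])
  also have "adj_mat V * (\<dots>) = 1\<^sub>m n" using assms unitary_mat_adj_mult[of n U] unitary_mat_adj_mult[of n V] V by simp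
  finally show ?thesis using U V unfolding unitary_mat_def by auto
qed

lemma unitary_mat_one: "unitary_mat n (1\<^sub>m n)"
  unfolding unitary_mat_def by auto

lemma unitary_mat_four_block_one:
  assumes V: "unitary_mat k V"
  shows "unitary_mat (Suc k) (four_block_mat (1\<^sub>m 1) (0\<^sub>m 1 k) (0\<^sub>m k 1) V)"
proof -
  have Vc: "V \<in> carrier_mat k k" using V unitary_mat_carrier by auto
  let ?V = "four_block_mat (1\<^sub>m 1) (0\<^sub>m 1 k) (0\<^sub>m k 1) V"
  have "adj_mat ?V = four_block_mat (1\<^sub>m 1) (0\<^sub>m 1 k) (0\<^sub>m k 1) (adj_mat V)"
    using Vc by (subst adj_mat_four_block[of _ 1 1 _ k _ k], auto)
  hence "adj_mat ?V * ?V = four_block_mat (1\<^sub>m 1) (0\<^sub>m 1 k) (0\<^sub>m k 1) (1\<^sub>m k)"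
    using Vc unitary_mat_adj_mult[OF V] by (simp, subst mult_four_block_mat[of _ 1 1 _ k _ k _ _ 1 _ k], auto)
  moreover have "?V \<in> carrier_mat (Suc k) (Suc k)" using four_block_carrier_mat[of "1\<^sub>m 1" 1 1 V k k] Vc by simp
  ultimately show ?thesis unfolding unitary_mat_def by simp
qed

lemma unitary_mat_mult_adj_cancel: assumes V: "unitary_mat n V" and Z: "Z \<in> carrier_mat n k"
  shows "V * (adj_mat V * Z) = Z"
proof -
  have Vc: "V \<in> carrier_mat n n" using V unitary_mat_carrier by auto
  have "V * (adj_mat V * Z) = (V * adj_mat V) * Z" using Vc Z by (intro assoc_mult_mat[symmetric, of _ n n _ n _ k], auto)
  thus ?thesis using unitary_mat_mult_adj[OF V] Z by simp
qed

lemma cmod_det_unitary: assumes "unitary_mat n U" shows "cmod (det U) = 1"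
proof -
  have U: "U \<in> carrier_mat n n" using assms unitary_mat_carrier by auto
  have "det (adj_mat U * U) = 1" using unitary_mat_adj_mult[OF assms] by simp
  hence "cnj (det U) * det U = 1" using U by (simp add: det_mult[of _ n] det_adj_mat)
  hence "cmod (cnj (det U) * det U) = 1" by simp
  hence "cmod (det U) * cmod (det U) = 1" by (simp only: norm_mult complex_mod_cnj)
  hence "(cmod (det U) - 1) * (cmod (det U) + 1) = 0" by (simp add: algebra_simps)
  moreover have "cmod (det U) + 1 \<noteq> 0" using norm_ge_zero[of "det U"] by linarith
  ultimately show ?thesis by simp
qed

lemma det_unitary_conj: assumes V: "unitary_mat n V" and D: "D \<in> carrier_mat n n"
  shows "det (V * D * adj_mat V) = det D"
proof -
  have Vc: "V \<in> carrier_mat n n" using V unitary_mat_carrier by auto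
  have "det (V * D * adj_mat V) = det V * det D * cnj (det V)"
    using Vc D by (simp add: det_mult[of _ n] det_adj_mat)
  also have "\<dots> = det D * (cnj (det V) * det V)" by simp
  also have "cnj (det V) * det V = 1" using cnj_mult_self_eq_cmod_sq[of "det V"] cmod_det_unitary[OF V] by simp
  finally show ?thesis by simp
qed

lemma det_adj_unitary_conj: assumes V: "unitary_mat n V" and D: "D \<in> carrier_mat n n"
  shows "det (adj_mat V * D * V) = det D"
  using det_unitary_conj[OF unitary_mat_adj[OF V] D] by simp

lemma unitary_mat_rows_orthonormal: assumes V: "unitary_mat n V" and a: "a < n" and b: "b < n"
  shows "(\<Sum>k<n. V $$ (a,k) * cnj (V $$ (b,k))) = (if a = b then 1 else 0)"
proof -
  have Vc: "V \<in> carrier_mat n n" using V unitary_mat_carrier by auto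
  have "(V * adj_mat V) $$ (a,b) = (\<Sum>k<n. V $$ (a,k) * adj_mat V $$ (k,b))"
    using Vc a b by (simp add: row_scalar_prod_eq_sum[of V n n])
  also have "\<dots> = (\<Sum>k<n. V $$ (a,k) * cnj (V $$ (b,k)))" using Vc a b by (intro sum.cong refl, auto)
  finally show ?thesis using unitary_mat_mult_adj[OF V] a b by simp
qed

lemma cscalar_prod_smult: assumes "v \<in> carrier_vec n" "w \<in> carrier_vec n"
  shows "(a \<cdot>\<^sub>v v) \<bullet>c (b \<cdot>\<^sub>v (w::complex vec)) = a * cnj b * (v \<bullet>c w)"
  using assms by (simp add: scalar_prod_def sum_distrib_left algebra_simps)

lemma cscalar_prod_self_real: fixes w :: "complex vec"
  shows "w \<bullet>c w = complex_of_real (Re (w \<bullet>c w)) \<and> Re (w \<bullet>c w) \<ge> 0"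
proof -
  have "0 \<le> w \<bullet>c w" by (rule conjugate_square_ge_0_vec)
  thus ?thesis by (auto simp: less_eq_complex_def complex_eq_iff)
qed

lemma unitary_mat_of_corthogonal:
  assumes ws: "set ws \<subseteq> carrier_vec n" "corthogonal ws" "length ws = n"
  defines "H \<equiv> mat_of_cols n (map (\<lambda>w. complex_of_real (1 / sqrt (Re (w \<bullet>c w))) \<cdot>\<^sub>v w) ws)"
  shows "unitary_mat n H"
proof -
  define c where "c = (\<lambda>w::complex vec. complex_of_real (1 / sqrt (Re (w \<bullet>c w))))"
  have wsi: "ws ! i \<in> carrier_vec n" if "i < n" for i using ws that by auto
  have Hc: "H \<in> carrier_mat n n" unfolding H_def using ws(3) by auto
  have colH: "col H j = c (ws ! j) \<cdot>\<^sub>v ws ! j" if "j < n" for j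
    unfolding H_def c_def using that ws by (subst col_mat_of_cols, auto)
  have "adj_mat H * H = 1\<^sub>m n"
  proof (rule eq_matI)
    fix i j assume "i < dim_row (1\<^sub>m n)" "j < dim_col (1\<^sub>m n)"
    hence i: "i < n" and j: "j < n" by auto
    have "(adj_mat H * H) $$ (i,j) = col H j \<bullet>c col H i"
      using Hc i j by (simp add: scalar_prod_def mult.commute)
    also have "\<dots> = c (ws!j) * cnj (c (ws!i)) * (ws!j \<bullet>c ws!i)"
      unfolding colH[OF i] colH[OF j] by (rule cscalar_prod_smult[OF wsi[OF j] wsi[OF i]])
    also have "\<dots> = 1\<^sub>m n $$ (i,j)"
    proof (cases "i = j")
      case True
      have "ws!i \<bullet>c ws!i \<noteq> 0" using ws(2,3) i unfolding corthogonal_def by auto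
      hence p: "Re (ws!i \<bullet>c ws!i) > 0" and e: "ws!i \<bullet>c ws!i = of_real (Re (ws!i \<bullet>c ws!i))"
        using cscalar_prod_self_real[of "ws!i"] by (auto simp: complex_eq_iff)
      have "c (ws!i) * cnj (c (ws!i)) * (ws!i \<bullet>c ws!i)
          = complex_of_real (1 / sqrt (Re (ws!i \<bullet>c ws!i)) * (1 / sqrt (Re (ws!i \<bullet>c ws!i))) * Re (ws!i \<bullet>c ws!i))"
        unfolding c_def by (subst e, simp only: of_real_mult complex_cnj_complex_of_real)
      also have "\<dots> = 1" using p by (simp add: field_simps)
      finally show ?thesis using True i by simp
    next
      case False
      have "ws!j \<bullet>c ws!i = 0" using ws(2,3) i j False unfolding corthogonal_def by auto
      thus ?thesis using False i j by simp
    qed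
    finally show "(adj_mat H * H) $$ (i,j) = 1\<^sub>m n $$ (i,j)" .
  qed (use Hc in auto)
  thus ?thesis using Hc unfolding unitary_mat_def by simp
qed

lemma unitary_mat_with_first_col:
  assumes v: "v \<in> carrier_vec n" and v0: "v \<noteq> 0\<^sub>v n"
  shows "\<exists>H c. unitary_mat n H \<and> col H 0 = c \<cdot>\<^sub>v v"
proof -
  interpret cof_vec_space n "TYPE(complex)" .
  define b where "b = basis_completion v"
  from basis_completion[OF v v0, folded b_def]
  have b: "set b \<subseteq> carrier_vec n" "distinct b" "\<not> lin_dep (set b)" "hd b = v" "length b = n"
    by auto
  have n: "n \<noteq> 0" using v v0 by (intro notI, auto)
  obtain vs where bv: "b = v # vs" using b(4,5) n by (cases b, auto)
  define ws where "ws = gram_schmidt n b"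
  from gram_schmidt_result[OF b(1-3) ws_def]
  have ws: "set ws \<subseteq> carrier_vec n" "corthogonal ws" "length ws = n" using b(5) by auto
  have "hd ws = v" using gram_schmidt_hd[OF v, of vs] bv ws_def by simp
  hence "ws ! 0 = v" using ws(3) n by (cases ws, auto)
  define H where "H = mat_of_cols n (map (\<lambda>w. complex_of_real (1 / sqrt (Re (w \<bullet>c w))) \<cdot>\<^sub>v w) ws)"
  have "col H 0 = complex_of_real (1 / sqrt (Re (v \<bullet>c v))) \<cdot>\<^sub>v v"
    unfolding H_def using ws n \<open>ws ! 0 = v\<close> by (subst col_mat_of_cols, auto)
  thus ?thesis using unitary_mat_of_corthogonal[OF ws] unfolding H_def[symmetric] by blast
qed

section \<open>Diagonal matrices and the spectral theorem\<close>

abbreviation real_diag_mat :: "nat \<Rightarrow> (nat \<Rightarrow> real) \<Rightarrow> complex mat" where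
  "real_diag_mat n d \<equiv> mat_diag n (\<lambda>k. complex_of_real (d k))"

lemma dim_mat_diag[simp]: "dim_row (mat_diag n d) = n" "dim_col (mat_diag n d) = n"
  by (auto simp: mat_diag_def)

lemma mat_diag_index[simp]: "i < n \<Longrightarrow> j < n \<Longrightarrow> mat_diag n d $$ (i,j) = (if i = j then d i else 0)"
  by (simp add: mat_diag_def)

lemma mat_diag_add: "mat_diag n a + mat_diag n b = mat_diag n (\<lambda>i. a i + b i :: 'a :: monoid_add)"
  by (intro eq_matI, auto)

lemma mat_diag_zero: "(\<forall>k<n. d k = 0) \<Longrightarrow> mat_diag n d = 0\<^sub>m n n"
  by (intro eq_matI, auto)

lemma mat_diag_mult_vec: assumes "y \<in> carrier_vec n"
  shows "mat_diag n d *\<^sub>v y = vec n (\<lambda>k. d k * y $ k)"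
proof (rule eq_vecI)
  fix i assume "i < dim_vec (vec n (\<lambda>k. d k * y $ k))" hence i: "i < n" by simp
  have "(mat_diag n d *\<^sub>v y) $ i = (\<Sum>k<n. mat_diag n d $$ (i,k) * y $ k)"
    using assms i by (intro mult_mat_vec_index_sum, auto)
  also have "\<dots> = (\<Sum>k<n. if i = k then d i * y $ k else 0)"
    using i by (intro sum.cong refl, auto)
  also have "\<dots> = d i * y $ i" using i by simp
  finally show "(mat_diag n d *\<^sub>v y) $ i = vec n (\<lambda>k. d k * y $ k) $ i" using i by simp
qed simp

lemma mat_diag_mult_unit_vec: assumes "k < n" shows "mat_diag n d *\<^sub>v unit_vec n k = d k \<cdot>\<^sub>v unit_vec n k"
  using assms by (intro eq_vecI, auto simp: mat_diag_mult_vec unit_vec_def)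

lemma mult_mat_diag_index: assumes "C \<in> carrier_mat n n" "a < n" "b < n"
  shows "(C * mat_diag n d) $$ (a,b) = C $$ (a,b) * d b"
proof -
  have "(C * mat_diag n d) $$ (a,b) = (\<Sum>k<n. C $$ (a,k) * mat_diag n d $$ (k,b))"
    using assms by (simp add: row_scalar_prod_eq_sum[of C n n])
  also have "\<dots> = (\<Sum>k<n. if k = b then C $$ (a,k) * d b else 0)"
    using assms by (intro sum.cong refl, auto)
  finally show ?thesis using assms by simp
qed

lemma det_mat_diag: "det (mat_diag n d) = (\<Prod>k<n. d k)"
proof -
  have "upper_triangular (mat_diag n d)" by (auto simp: upper_triangular_def)
  hence "det (mat_diag n d) = prod_list (diag_mat (mat_diag n d))" by (intro det_upper_triangular[of _ n], auto)
  also have "\<dots> = (\<Prod>k<n. d k)" unfolding prod_list_diag_prod by (simp add: atLeast0LessThan)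
  finally show ?thesis .
qed

lemma adj_mat_real_diag_mat: "adj_mat (real_diag_mat n d) = real_diag_mat n d"
  by (intro eq_matI, auto)

lemma complex_mat_eigenvector_exists:
  assumes A: "(A :: complex mat) \<in> carrier_mat (Suc k) (Suc k)"
  obtains v e where "v \<in> carrier_vec (Suc k)" "v \<noteq> 0\<^sub>v (Suc k)" "A *\<^sub>v v = e \<cdot>\<^sub>v v"
proof -
  have "degree (char_poly A) = Suc k" using degree_monic_char_poly[OF A] by auto
  hence "\<not> constant (poly (char_poly A))" by (simp add: constant_degree)
  then obtain e where "poly (char_poly A) e = 0" using fundamental_theorem_of_algebra by blast
  hence "eigenvalue A e" using eigenvalue_root_char_poly[OF A] by simp
  hence "eigenvector A (find_eigenvector A e) e" using find_eigenvector[OF A] by simp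
  thus ?thesis using A that unfolding eigenvector_def by auto
qed

lemma hermitian_four_block_of_first_eigenvector:
  assumes Bc: "B \<in> carrier_mat (Suc k) (Suc k)" and hB: "adj_mat B = B"
    and Bu: "B *\<^sub>v unit_vec (Suc k) 0 = e \<cdot>\<^sub>v unit_vec (Suc k) 0"
  shows "\<exists>A'. A' \<in> carrier_mat k k \<and> adj_mat A' = A' \<and>
    B = four_block_mat (mat 1 1 (\<lambda>_. complex_of_real (Re e))) (0\<^sub>m 1 k) (0\<^sub>m k 1) A'"
proof -
  let ?n = "Suc k"
  have col0: "B $$ (i,0) = (if i = 0 then e else 0)" if "i < ?n" for i
    using arg_cong[OF Bu, of "\<lambda>w. w $ i"] that mult_mat_vec_unit_vec_index[OF Bc that, of 0] by auto
  have herm_entry: "B $$ (i,j) = cnj (B $$ (j,i))" if "i < ?n" "j < ?n" for i j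
    using arg_cong[OF hB, of "\<lambda>X. X $$ (i,j)"] Bc that by simp
  have "cnj e = e" using herm_entry[of 0 0] col0[of 0] by (metis zero_less_Suc)
  hence e_real: "complex_of_real (Re e) = e" by (simp add: complex_eq_iff)
  define A' where "A' = mat k k (\<lambda>(i,j). B $$ (Suc i, Suc j))"
  have A'c: "A' \<in> carrier_mat k k" unfolding A'_def by simp
  have hA': "adj_mat A' = A'"
  proof (rule eq_matI)
    fix i j assume "i < dim_row A'" "j < dim_col A'"
    thus "adj_mat A' $$ (i,j) = A' $$ (i,j)" using herm_entry[of "Suc i" "Suc j"] by (simp add: A'_def)
  qed (auto simp: A'_def)
  have "B = four_block_mat (mat 1 1 (\<lambda>_. complex_of_real (Re e))) (0\<^sub>m 1 k) (0\<^sub>m k 1) A'"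
  proof (rule eq_matI)
    fix i j assume "i < dim_row (four_block_mat (mat 1 1 (\<lambda>_. complex_of_real (Re e))) (0\<^sub>m 1 k) (0\<^sub>m k 1) A')"
      "j < dim_col (four_block_mat (mat 1 1 (\<lambda>_. complex_of_real (Re e))) (0\<^sub>m 1 k) (0\<^sub>m k 1) A')"
    hence i: "i < ?n" and j: "j < ?n" using A'c by auto
    show "B $$ (i,j) = four_block_mat (mat 1 1 (\<lambda>_. complex_of_real (Re e))) (0\<^sub>m 1 k) (0\<^sub>m k 1) A' $$ (i,j)"
    proof (cases "i = 0 \<or> j = 0")
      case True
      thus ?thesis using i j col0 herm_entry[of 0 j] A'c e_real by auto
    next
      case False
      then obtain i' j' where "i = Suc i'" "j = Suc j'" by (cases i; cases j, auto)
      thus ?thesis using i j A'c by (auto simp: A'_def)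
    qed
  qed (use Bc A'c in auto)
  thus ?thesis using A'c hA' by blast
qed

lemma hermitian_deflation:
  assumes A: "A \<in> carrier_mat (Suc k) (Suc k)" and hA: "adj_mat A = A"
  shows "\<exists>H e A'. unitary_mat (Suc k) H \<and> A' \<in> carrier_mat k k \<and> adj_mat A' = A' \<and>
    adj_mat H * A * H = four_block_mat (mat 1 1 (\<lambda>_. complex_of_real e)) (0\<^sub>m 1 k) (0\<^sub>m k 1) A'"
proof -
  let ?n = "Suc k"
  obtain v e where v: "v \<in> carrier_vec ?n" and v0: "v \<noteq> 0\<^sub>v ?n" and Av: "A *\<^sub>v v = e \<cdot>\<^sub>v v"
    using complex_mat_eigenvector_exists[OF A] by blast
  obtain H c where H: "unitary_mat ?n H" and colH: "col H 0 = c \<cdot>\<^sub>v v"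
    using unitary_mat_with_first_col[OF v v0] by blast
  have Hc: "H \<in> carrier_mat ?n ?n" using H unitary_mat_carrier by auto
  have Hu: "H *\<^sub>v unit_vec ?n 0 = c \<cdot>\<^sub>v v"
    unfolding colH[symmetric] using Hc by (intro eq_vecI, auto simp: mult_mat_vec_unit_vec_index)
  have "(adj_mat H * A * H) *\<^sub>v unit_vec ?n 0 = (adj_mat H * A) *\<^sub>v (H *\<^sub>v unit_vec ?n 0)"
    using Hc A by (intro assoc_mult_mat_vec[of _ ?n ?n _ ?n], auto)
  also have "\<dots> = adj_mat H *\<^sub>v (A *\<^sub>v (H *\<^sub>v unit_vec ?n 0))"
    using Hc A by (intro assoc_mult_mat_vec[of _ ?n ?n _ ?n], auto)
  also have "\<dots> = e \<cdot>\<^sub>v (adj_mat H *\<^sub>v (H *\<^sub>v unit_vec ?n 0))"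
    unfolding Hu using A v Av Hc by (simp add: mult_mat_vec[of _ ?n ?n] smult_smult_assoc mult.commute)
  also have "adj_mat H *\<^sub>v (H *\<^sub>v unit_vec ?n 0) = unit_vec ?n 0"
    using Hc unitary_mat_adj_mult[OF H] by (simp flip: assoc_mult_mat_vec[of _ ?n ?n _ ?n])
  finally have Bu: "(adj_mat H * A * H) *\<^sub>v unit_vec ?n 0 = e \<cdot>\<^sub>v unit_vec ?n 0" .
  have hB: "adj_mat (adj_mat H * A * H) = adj_mat H * A * H" using Hc A hA
    by (simp add: adj_mat_mult[of _ ?n ?n _ ?n] assoc_mult_mat[of _ ?n ?n _ ?n _ ?n])
  have "adj_mat H * A * H \<in> carrier_mat ?n ?n" using Hc A by auto
  then obtain A' where "A' \<in> carrier_mat k k" "adj_mat A' = A'"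
    "adj_mat H * A * H = four_block_mat (mat 1 1 (\<lambda>_. complex_of_real (Re e))) (0\<^sub>m 1 k) (0\<^sub>m k 1) A'"
    using hermitian_four_block_of_first_eigenvector[OF _ hB Bu] by blast
  thus ?thesis using H by blast
qed

lemma hermitian_unitarily_diagonalizable:
  assumes "A \<in> carrier_mat n n" "adj_mat A = A"
  shows "\<exists>V d. unitary_mat n V \<and> adj_mat V * A * V = real_diag_mat n d"
  using assms
proof (induction n arbitrary: A)
  case 0
  have "adj_mat (1\<^sub>m 0) * A * 1\<^sub>m 0 = real_diag_mat 0 (\<lambda>_. 0)"
    using 0 by (intro eq_matI, auto)
  thus ?case using unitary_mat_one[of 0] by (intro exI[of _ "1\<^sub>m 0"] exI[of _ "\<lambda>_. 0"], simp)
next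
  case (Suc k A)
  let ?n = "Suc k"
  obtain H e A' where H: "unitary_mat ?n H" and A'c: "A' \<in> carrier_mat k k" and hA': "adj_mat A' = A'"
    and HAH: "adj_mat H * A * H = four_block_mat (mat 1 1 (\<lambda>_. complex_of_real e)) (0\<^sub>m 1 k) (0\<^sub>m k 1) A'"
    using hermitian_deflation[OF Suc.prems] by blast
  obtain V' d' where V': "unitary_mat k V'" and dV': "adj_mat V' * A' * V' = real_diag_mat k d'"
    using Suc.IH[OF A'c hA'] by blast
  have V'c: "V' \<in> carrier_mat k k" using V' unitary_mat_carrier by auto
  have Hc: "H \<in> carrier_mat ?n ?n" using H unitary_mat_carrier by auto
  define V'' where "V'' = four_block_mat (1\<^sub>m 1) (0\<^sub>m 1 k) (0\<^sub>m k 1) V'"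
  have V'': "unitary_mat ?n V''" unfolding V''_def by (rule unitary_mat_four_block_one[OF V'])
  have V''c: "V'' \<in> carrier_mat ?n ?n" using V'' unitary_mat_carrier by auto
  have aV'': "adj_mat V'' = four_block_mat (1\<^sub>m 1) (0\<^sub>m 1 k) (0\<^sub>m k 1) (adj_mat V')"
    unfolding V''_def using V'c by (subst adj_mat_four_block[of _ 1 1 _ k _ k], auto)
  have "adj_mat (H * V'') * A * (H * V'') = adj_mat V'' * (adj_mat H * A * H) * V''"
    unfolding adj_mat_mult[OF Hc V''c] by (rule assoc_mult_mat5) (use Hc V''c Suc.prems in auto)
  also have "adj_mat V'' * (adj_mat H * A * H)
      = four_block_mat (mat 1 1 (\<lambda>_. complex_of_real e)) (0\<^sub>m 1 k) (0\<^sub>m k 1) (adj_mat V' * A')"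
    unfolding HAH aV'' using V'c A'c by (subst mult_four_block_mat[of _ 1 1 _ k _ k _ _ 1 _ k], auto)
  also have "\<dots> * V'' = four_block_mat (mat 1 1 (\<lambda>_. complex_of_real e)) (0\<^sub>m 1 k) (0\<^sub>m k 1) (adj_mat V' * A' * V')"
    unfolding V''_def using V'c A'c by (subst mult_four_block_mat[of _ 1 1 _ k _ k _ _ 1 _ k], auto)
  also have "\<dots> = real_diag_mat ?n (\<lambda>i. if i = 0 then e else d' (i - 1))"
    unfolding dV' using V'c A'c by (intro eq_matI) auto
  finally show ?case using unitary_mat_mult[OF H V''] by (intro exI conjI)
qed

lemma hermitian_spectral_decomposition: assumes "A \<in> carrier_mat n n" "adj_mat A = A"
  shows "\<exists>V d. unitary_mat n V \<and> A = V * real_diag_mat n d * adj_mat V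
     \<and> adj_mat V * A * V = real_diag_mat n d"
proof -
  obtain V d where V: "unitary_mat n V" and D: "adj_mat V * A * V = real_diag_mat n d"
    using hermitian_unitarily_diagonalizable[OF assms] by blast
  have Vc: "V \<in> carrier_mat n n" using V unitary_mat_carrier by auto
  have "V * real_diag_mat n d * adj_mat V = (V * adj_mat V) * A * (V * adj_mat V)"
    unfolding D[symmetric] using Vc assms by (simp add: assoc_mult_mat5[of _ n])
  also have "\<dots> = A" using unitary_mat_mult_adj[OF V] assms by simp
  finally show ?thesis using V D by metis
qed

lemma hermitian_of_spectral: assumes "unitary_mat n V" "A = V * real_diag_mat n d * adj_mat V"
  shows "adj_mat A = A"
proof -
  have Vc: "V \<in> carrier_mat n n" using assms unitary_mat_carrier by auto
  let ?D = "real_diag_mat n d"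
  have "adj_mat (V * ?D * adj_mat V) = adj_mat (adj_mat V) * adj_mat (V * ?D)"
    using Vc by (intro adj_mat_mult[of _ n n _ n], auto)
  also have "adj_mat (V * ?D) = adj_mat ?D * adj_mat V"
    using Vc by (intro adj_mat_mult[of _ n n _ n], auto)
  finally show ?thesis unfolding assms(2) using Vc
    by (simp add: adj_mat_real_diag_mat assoc_mult_mat[of _ n n _ n _ n])
qed

lemma unitary_conj_diag_index: assumes V: "V \<in> carrier_mat n n" and a: "a < n" and b: "b < n"
  shows "(V * mat_diag n f * adj_mat V) $$ (a,b) = (\<Sum>k<n. V $$ (a,k) * f k * cnj (V $$ (b,k)))"
proof -
  have VD: "V * mat_diag n f \<in> carrier_mat n n" using V by simp
  have "(V * mat_diag n f * adj_mat V) $$ (a,b) = (\<Sum>k<n. (V * mat_diag n f) $$ (a,k) * adj_mat V $$ (k,b))"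
    using VD V a b by (simp add: row_scalar_prod_eq_sum[of "V * mat_diag n f" n n])
  also have "\<dots> = (\<Sum>k<n. V $$ (a,k) * f k * cnj (V $$ (b,k)))"
  proof (intro sum.cong refl)
    fix k assume "k \<in> {..<n}" hence k: "k < n" by simp
    have "(V * mat_diag n f) $$ (a,k) = V $$ (a,k) * f k" by (rule mult_mat_diag_index[OF V a k])
    thus "(V * mat_diag n f) $$ (a,k) * adj_mat V $$ (k,b) = V $$ (a,k) * f k * cnj (V $$ (b,k))"
      using V k b by simp
  qed
  finally show ?thesis .
qed

lemma one_minus_unitary_conj_diag: assumes V: "unitary_mat n V"
  shows "1\<^sub>m n - V * mat_diag n f * adj_mat V = V * mat_diag n (\<lambda>k. 1 - f k) * adj_mat V"
proof (rule eq_matI)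
  have Vc: "V \<in> carrier_mat n n" using V unitary_mat_carrier by auto
  fix a b assume "a < dim_row (V * mat_diag n (\<lambda>k. 1 - f k) * adj_mat V)" "b < dim_col (V * mat_diag n (\<lambda>k. 1 - f k) * adj_mat V)"
  hence a: "a < n" and b: "b < n" using Vc by auto
  have "(V * mat_diag n (\<lambda>k. 1 - f k) * adj_mat V) $$ (a,b) = (\<Sum>k<n. V $$ (a,k) * (1 - f k) * cnj (V $$ (b,k)))"
    by (rule unitary_conj_diag_index[OF Vc a b])
  also have "\<dots> = (\<Sum>k<n. V $$ (a,k) * cnj (V $$ (b,k))) - (\<Sum>k<n. V $$ (a,k) * f k * cnj (V $$ (b,k)))"
    by (simp add: sum_subtractf algebra_simps)
  also have "(\<Sum>k<n. V $$ (a,k) * f k * cnj (V $$ (b,k))) = (V * mat_diag n f * adj_mat V) $$ (a,b)"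
    by (rule unitary_conj_diag_index[OF Vc a b, symmetric])
  finally show "(1\<^sub>m n - V * mat_diag n f * adj_mat V) $$ (a,b) = (V * mat_diag n (\<lambda>k. 1 - f k) * adj_mat V) $$ (a,b)"
    using unitary_mat_rows_orthonormal[OF V a b] a b Vc by simp
qed (use V unitary_mat_carrier in auto)

lemma unitary_conj_square: assumes V: "unitary_mat n V" and S: "S \<in> carrier_mat n n"
  shows "(V * S * adj_mat V) * (V * S * adj_mat V) = V * (S * S) * adj_mat V"
proof -
  have Vc: "V \<in> carrier_mat n n" using V unitary_mat_carrier by auto
  have aVc: "adj_mat V \<in> carrier_mat n n" using Vc by simp
  have VS: "V * S \<in> carrier_mat n n" using Vc S by simp
  have "(V * S * adj_mat V) * (V * S * adj_mat V) = (V * S) * (adj_mat V * (V * S * adj_mat V))"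
    using assoc_mult_mat[OF VS aVc, of "V * S * adj_mat V" n] mult_mult_carrier_mat[OF Vc S aVc] by simp
  also have "adj_mat V * (V * S * adj_mat V) = (adj_mat V * V) * S * adj_mat V"
    by (rule assoc_mult_mat4[OF aVc Vc S aVc])
  also have "\<dots> = S * adj_mat V" using unitary_mat_adj_mult[OF V] S by simp
  also have "(V * S) * (S * adj_mat V) = V * (S * S) * adj_mat V"
    using Vc S aVc by (simp add: assoc_mult_mat[of _ n n _ n _ n])
  finally show ?thesis .
qed

lemma unitary_col_eigenvector: assumes V: "unitary_mat n V" and Mc: "M \<in> carrier_mat n n"
  and D: "adj_mat V * M * V = mat_diag n d" and k: "k < n"
  shows "M *\<^sub>v (V *\<^sub>v unit_vec n k) = d k \<cdot>\<^sub>v (V *\<^sub>v unit_vec n k)"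
proof -
  have Vc: "V \<in> carrier_mat n n" using V unitary_mat_carrier by auto
  have aVc: "adj_mat V \<in> carrier_mat n n" using Vc by simp
  have "V * mat_diag n d = (V * adj_mat V) * M * V" unfolding D[symmetric]
    by (rule assoc_mult_mat4[OF Vc aVc Mc Vc])
  also have "\<dots> = M * V" using unitary_mat_mult_adj[OF V] Mc by simp
  finally have MV: "M * V = V * mat_diag n d" by simp
  have "M *\<^sub>v (V *\<^sub>v unit_vec n k) = (M * V) *\<^sub>v unit_vec n k"
    using Vc Mc by (intro assoc_mult_mat_vec[of _ n n _ n, symmetric], auto)
  also have "\<dots> = V *\<^sub>v (mat_diag n d *\<^sub>v unit_vec n k)"
    unfolding MV using Vc by (intro assoc_mult_mat_vec[of _ n n _ n], auto)
  also have "\<dots> = d k \<cdot>\<^sub>v (V *\<^sub>v unit_vec n k)" unfolding mat_diag_mult_unit_vec[OF k] using Vc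
    by (intro mult_mat_vec[of _ n n], auto)
  finally show ?thesis .
qed

lemma poly_char_poly_spectral: assumes V: "unitary_mat n V" and P: "P = V * real_diag_mat n d * adj_mat V"
  shows "poly (char_poly P) x = (\<Prod>k<n. x - complex_of_real (d k))"
proof -
  have Vc: "V \<in> carrier_mat n n" using V unitary_mat_carrier by auto
  have Pc: "P \<in> carrier_mat n n" unfolding P using Vc by (intro mult_mult_carrier_mat, auto)
  have "- char_matrix P x = V * mat_diag n (\<lambda>k. x - complex_of_real (d k)) * adj_mat V"
  proof (rule eq_matI)
    fix a b assume "a < dim_row (V * mat_diag n (\<lambda>k. x - complex_of_real (d k)) * adj_mat V)"
      "b < dim_col (V * mat_diag n (\<lambda>k. x - complex_of_real (d k)) * adj_mat V)"
    hence a: "a < n" and b: "b < n" using Vc by auto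
    have "(V * mat_diag n (\<lambda>k. x - complex_of_real (d k)) * adj_mat V) $$ (a,b)
       = (\<Sum>k<n. V $$ (a,k) * (x - complex_of_real (d k)) * cnj (V $$ (b,k)))" by (rule unitary_conj_diag_index[OF Vc a b])
    also have "\<dots> = x * (\<Sum>k<n. V $$ (a,k) * cnj (V $$ (b,k))) - (\<Sum>k<n. V $$ (a,k) * complex_of_real (d k) * cnj (V $$ (b,k)))"
      by (simp add: sum_distrib_left sum_subtractf algebra_simps)
    also have "(\<Sum>k<n. V $$ (a,k) * complex_of_real (d k) * cnj (V $$ (b,k))) = P $$ (a,b)"
      unfolding P by (rule unitary_conj_diag_index[OF Vc a b, symmetric])
    finally show "(- char_matrix P x) $$ (a,b) = (V * mat_diag n (\<lambda>k. x - complex_of_real (d k)) * adj_mat V) $$ (a,b)"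
      using unitary_mat_rows_orthonormal[OF V a b] a b Pc by (auto simp: char_matrix_def)
  qed (use Pc Vc in \<open>auto simp: char_matrix_def\<close>)
  hence "poly (char_poly P) x = det (V * mat_diag n (\<lambda>k. x - complex_of_real (d k)) * adj_mat V)"
    using char_poly_matrix[OF Pc] by simp
  also have "\<dots> = (\<Prod>k<n. x - complex_of_real (d k))" by (simp add: det_unitary_conj[OF V] det_mat_diag)
  finally show ?thesis .
qed

lemma det_one_minus_eq_char_poly: assumes "(A :: complex mat) \<in> carrier_mat n n"
  shows "det (1\<^sub>m n - A) = poly (char_poly A) 1"
proof -
  have "- char_matrix A 1 = 1\<^sub>m n - A" using assms by (intro eq_matI, auto simp: char_matrix_def)
  thus ?thesis using char_poly_matrix[OF assms, of 1] by simp
qed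

lemma mult_right_cancel_invertible: assumes Wc: "W \<in> carrier_mat n n" and d: "det W \<noteq> 0" and Uc: "U \<in> carrier_mat n n"
  and UW: "U * W = (W :: complex mat)"
  shows "U = 1\<^sub>m n"
proof -
  define X where "X = (1 / det W) \<cdot>\<^sub>m Determinant.adj_mat W"
  have aW: "Determinant.adj_mat W \<in> carrier_mat n n" using Determinant.adj_mat(1)[OF Wc] .
  have Xc: "X \<in> carrier_mat n n" unfolding X_def using aW by simp
  have "W * X = (1 / det W) \<cdot>\<^sub>m (W * Determinant.adj_mat W)" unfolding X_def using Wc aW
    by (simp add: mult_smult_distrib[of _ n n _ n])
  also have "\<dots> = 1\<^sub>m n" unfolding Determinant.adj_mat(2)[OF Wc] using d by (intro eq_matI, auto)
  finally have WX: "W * X = 1\<^sub>m n" .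
  have "U = U * (W * X)" unfolding WX using Uc by simp
  also have "\<dots> = (U * W) * X" using Uc Wc Xc by (simp add: assoc_mult_mat[of _ n n _ n _ n])
  also have "\<dots> = 1\<^sub>m n" unfolding UW WX ..
  finally show ?thesis .
qed

section \<open>Quadratic forms and positive semidefinite matrices\<close>

text \<open>Conjugate-linear in the first argument, matching the quadratic form in \<open>psd_mat\<close>; the library's
  \<open>v \<bullet>c w\<close> conjugates the second argument instead.\<close>
definition cinner :: "complex vec \<Rightarrow> complex vec \<Rightarrow> complex" where
  "cinner v w = map_vec cnj v \<bullet> w"

lemma cinner_eq_sum: assumes "v \<in> carrier_vec n" "w \<in> carrier_vec n"
  shows "cinner v w = (\<Sum>i<n. cnj (v $ i) * w $ i)"
  using assms by (simp add: cinner_def scalar_prod_def atLeast0LessThan)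

lemma cinner_adj_mat: assumes "X \<in> carrier_mat m n" "v \<in> carrier_vec m" "w \<in> carrier_vec n"
  shows "cinner v (X *\<^sub>v w) = cinner (adj_mat X *\<^sub>v v) w"
proof -
  have "cinner v (X *\<^sub>v w) = (\<Sum>i<m. cnj (v $ i) * (X *\<^sub>v w) $ i)"
    using assms by (intro cinner_eq_sum, auto)
  also have "\<dots> = (\<Sum>i<m. cnj (v $ i) * (\<Sum>k<n. X $$ (i,k) * w $ k))"
    using assms by (intro sum.cong refl, simp add: row_scalar_prod_eq_sum[of X m n])
  also have "\<dots> = (\<Sum>i<m. \<Sum>k<n. cnj (v $ i) * X $$ (i,k) * w $ k)"
    by (simp add: sum_distrib_left mult.assoc)
  also have "\<dots> = (\<Sum>k<n. \<Sum>i<m. cnj (v $ i) * X $$ (i,k) * w $ k)"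
    by (rule sum.swap)
  also have "\<dots> = (\<Sum>k<n. cnj (\<Sum>i<m. cnj (X $$ (i,k)) * v $ i) * w $ k)"
    by (intro sum.cong refl, simp add: sum_distrib_right sum_distrib_left algebra_simps)
  also have "\<dots> = (\<Sum>k<n. cnj ((adj_mat X *\<^sub>v v) $ k) * w $ k)"
    using assms by (intro sum.cong refl, simp add: row_scalar_prod_eq_sum[of "adj_mat X" n m] cnj_sum mult.commute)
  also have "\<dots> = cinner (adj_mat X *\<^sub>v v) w"
    using assms mult_mat_vec_carrier[of "adj_mat X" n m v] by (intro cinner_eq_sum[symmetric], auto)
  finally show ?thesis .
qed

lemma cinner_smult_left: assumes "v \<in> carrier_vec n" "w \<in> carrier_vec n"
  shows "cinner (c \<cdot>\<^sub>v v) w = cnj c * cinner v w"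
  using assms by (simp add: cinner_eq_sum[of _ n] sum_distrib_left algebra_simps)

lemma cinner_smult_right: assumes "v \<in> carrier_vec n" "w \<in> carrier_vec n"
  shows "cinner v (c \<cdot>\<^sub>v w) = c * cinner v w"
  using assms by (simp add: cinner_eq_sum[of _ n] sum_distrib_left algebra_simps)

lemma cinner_add_right: assumes "v \<in> carrier_vec n" "a \<in> carrier_vec n" "b \<in> carrier_vec n"
  shows "cinner v (a + b) = cinner v a + cinner v b"
  using assms by (simp add: cinner_eq_sum[of _ n] sum.distrib algebra_simps)

lemma cinner_minus_right: assumes "v \<in> carrier_vec n" "a \<in> carrier_vec n" "b \<in> carrier_vec n"
  shows "cinner v (a - b) = cinner v a - cinner v b"
  using assms by (simp add: cinner_eq_sum[of _ n] sum_subtractf algebra_simps)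

lemma cinner_zero_right: assumes "v \<in> carrier_vec n" shows "cinner v (0\<^sub>v n) = 0"
  using assms by (simp add: cinner_eq_sum[of _ n])

lemma cinner_self: assumes "v \<in> carrier_vec n"
  shows "cinner v v = complex_of_real (\<Sum>i<n. (cmod (v $ i))^2)"
proof -
  have "cinner v v = (\<Sum>i<n. cnj (v $ i) * v $ i)" using assms by (simp add: cinner_eq_sum)
  also have "\<dots> = (\<Sum>i<n. complex_of_real ((cmod (v $ i))^2))"
    by (intro sum.cong refl, rule cnj_mult_self_eq_cmod_sq)
  finally show ?thesis by simp
qed

lemma sum_unit_vec_cmod_sq: assumes "k < n"
  shows "(\<Sum>j<n. d j * (cmod (unit_vec n k $ j))^2) = d k"
proof -
  have "(\<Sum>j<n. d j * (cmod (unit_vec n k $ j))^2) = (\<Sum>j<n. if k = j then d j else 0)"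
    by (intro sum.cong refl, auto simp: unit_vec_def)
  also have "\<dots> = d k" using assms by simp
  finally show ?thesis .
qed

lemma cinner_unit_vec: assumes "k < n" shows "cinner (unit_vec n k) (unit_vec n k) = 1"
proof -
  have "(\<Sum>j<n. (cmod (unit_vec n k $ j))^2) = 1" using sum_unit_vec_cmod_sq[OF assms, of "\<lambda>_. 1"] by simp
  thus ?thesis by (simp only: cinner_self[OF unit_vec_carrier] of_real_1)
qed

lemma cinner_unit_vec_left: assumes "x \<in> carrier_vec n" "k < n" shows "cinner (unit_vec n k) x = x $ k"
proof -
  have "cinner (unit_vec n k) x = (\<Sum>i<n. cnj (unit_vec n k $ i) * x $ i)" using assms by (intro cinner_eq_sum, auto)
  also have "\<dots> = (\<Sum>i<n. if k = i then x $ i else 0)" by (intro sum.cong refl, auto simp: unit_vec_def)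
  finally show ?thesis using assms by simp
qed

lemma sum_cmod_sq_eq_0_imp_zero: assumes "v \<in> carrier_vec n" "(\<Sum>i<n. (cmod (v $ i))^2) = 0"
  shows "v = 0\<^sub>v n"
proof (rule eq_vecI)
  fix i assume "i < dim_vec (0\<^sub>v n)" hence i: "i < n" by simp
  have "(cmod (v $ i))^2 = 0" using assms(2) sum_nonneg_eq_0_iff[of "{..<n}" "\<lambda>i. (cmod (v $ i))^2"] i
    by auto
  thus "v $ i = 0\<^sub>v n $ i" using i by simp
qed (use assms in auto)

lemma cinner_unitary: assumes "unitary_mat n U" "v \<in> carrier_vec n" "w \<in> carrier_vec n"
  shows "cinner (U *\<^sub>v v) (U *\<^sub>v w) = cinner v w"
proof -
  have U: "U \<in> carrier_mat n n" using assms unitary_mat_carrier by auto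
  have "cinner (U *\<^sub>v v) (U *\<^sub>v w) = cinner (adj_mat U *\<^sub>v (U *\<^sub>v v)) w"
    using U assms by (intro cinner_adj_mat[of _ n n], auto)
  also have "adj_mat U *\<^sub>v (U *\<^sub>v v) = (adj_mat U * U) *\<^sub>v v"
    using U assms by (intro assoc_mult_mat_vec[of _ n n _ n, symmetric], auto)
  also have "\<dots> = v" using unitary_mat_adj_mult[OF assms(1)] assms by simp
  finally show ?thesis .
qed

lemma unitary_col_nonzero: assumes V: "unitary_mat n V" and k: "k < n"
  shows "V *\<^sub>v unit_vec n k \<noteq> 0\<^sub>v n"
proof
  assume z: "V *\<^sub>v unit_vec n k = 0\<^sub>v n"
  have "cinner (V *\<^sub>v unit_vec n k) (V *\<^sub>v unit_vec n k) = 1"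
    using cinner_unitary[OF V, of "unit_vec n k" "unit_vec n k"] cinner_unit_vec[OF k] by simp
  thus False unfolding z using cinner_zero_right[of "0\<^sub>v n" n] by simp
qed

lemma cinner_real_diag_mat: assumes "y \<in> carrier_vec n"
  shows "cinner y (real_diag_mat n d *\<^sub>v y) = complex_of_real (\<Sum>k<n. d k * (cmod (y $ k))^2)"
proof -
  have "cinner y (real_diag_mat n d *\<^sub>v y) = (\<Sum>k<n. cnj (y $ k) * (complex_of_real (d k) * y $ k))"
    using assms by (simp add: mat_diag_mult_vec cinner_eq_sum[of _ n])
  also have "\<dots> = (\<Sum>k<n. complex_of_real (d k * (cmod (y $ k))^2))"
  proof (intro sum.cong refl)
    fix k show "cnj (y $ k) * (complex_of_real (d k) * y $ k) = complex_of_real (d k * (cmod (y $ k))^2)"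
      using cnj_mult_self_eq_cmod_sq[of "y $ k"] by (simp add: algebra_simps)
  qed
  finally show ?thesis by simp
qed

lemma cinner_spectral: assumes V: "unitary_mat n V" and A: "A = V * real_diag_mat n d * adj_mat V"
  and v: "v \<in> carrier_vec n"
  shows "cinner v (A *\<^sub>v v) = complex_of_real (\<Sum>k<n. d k * (cmod ((adj_mat V *\<^sub>v v) $ k))^2)"
proof -
  have Vc: "V \<in> carrier_mat n n" using V unitary_mat_carrier by auto
  let ?D = "real_diag_mat n d"
  let ?y = "adj_mat V *\<^sub>v v"
  have aVc: "adj_mat V \<in> carrier_mat n n" using Vc by simp
  have y: "?y \<in> carrier_vec n" using aVc v mult_mat_vec_carrier[of "adj_mat V" n n v] by simp
  have Dy: "?D *\<^sub>v ?y \<in> carrier_vec n" using y mult_mat_vec_carrier[of ?D n n ?y] by simp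
  have "A *\<^sub>v v = (V * ?D) *\<^sub>v ?y"
    unfolding A using Vc v aVc by (intro assoc_mult_mat_vec[of _ n n _ n], auto)
  also have "\<dots> = V *\<^sub>v (?D *\<^sub>v ?y)"
    using Vc y by (intro assoc_mult_mat_vec[of _ n n _ n], auto)
  finally have "cinner v (A *\<^sub>v v) = cinner v (V *\<^sub>v (?D *\<^sub>v ?y))" by simp
  also have "\<dots> = cinner ?y (?D *\<^sub>v ?y)"
    using Vc v Dy by (intro cinner_adj_mat[of _ n n], auto)
  finally have "cinner v (A *\<^sub>v v) = cinner ?y (?D *\<^sub>v ?y)" .
  thus ?thesis using cinner_real_diag_mat[OF y] by simp
qed

lemma adj_unitary_mult_unitary_vec: assumes "unitary_mat n V" "k < n"
  shows "adj_mat V *\<^sub>v (V *\<^sub>v unit_vec n k) = unit_vec n k"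
proof -
  have Vc: "V \<in> carrier_mat n n" using assms unitary_mat_carrier by auto
  have "adj_mat V *\<^sub>v (V *\<^sub>v unit_vec n k) = (adj_mat V * V) *\<^sub>v unit_vec n k"
    using Vc by (intro assoc_mult_mat_vec[of _ n n _ n, symmetric], auto)
  thus ?thesis using unitary_mat_adj_mult[OF assms(1)] by simp
qed

lemma cinner_unitary_col_spectral: assumes V: "unitary_mat n V" and A: "A = V * real_diag_mat n d * adj_mat V"
  and k: "k < n"
  shows "cinner (V *\<^sub>v unit_vec n k) (A *\<^sub>v (V *\<^sub>v unit_vec n k)) = complex_of_real (d k)"
proof -
  have Vc: "V \<in> carrier_mat n n" using V unitary_mat_carrier by auto
  have v: "V *\<^sub>v unit_vec n k \<in> carrier_vec n" using Vc mult_mat_vec_carrier[of V n n "unit_vec n k"] by simp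
  show ?thesis using cinner_spectral[OF V A v] adj_unitary_mult_unitary_vec[OF V k] sum_unit_vec_cmod_sq[OF k] by simp
qed

lemma hermitian_form_real: assumes "X \<in> carrier_mat n n" "adj_mat X = X" "v \<in> carrier_vec n"
  shows "cinner v (X *\<^sub>v v) = complex_of_real (Re (cinner v (X *\<^sub>v v)))"
proof -
  obtain V d where V: "unitary_mat n V" and A: "X = V * real_diag_mat n d * adj_mat V"
    using hermitian_spectral_decomposition[OF assms(1,2)] by blast
  show ?thesis using cinner_spectral[OF V A assms(3)] by simp
qed

lemma cinner_spectral_contraction: assumes V: "unitary_mat n V" and A: "A = V * real_diag_mat n d * adj_mat V"
  and d: "\<forall>k<n. 0 \<le> d k \<and> d k < 1" and v: "v \<in> carrier_vec n"
  shows "cinner v (A *\<^sub>v v) = complex_of_real (Re (cinner v (A *\<^sub>v v))) \<and> 0 \<le> Re (cinner v (A *\<^sub>v v))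
     \<and> (v \<noteq> 0\<^sub>v n \<longrightarrow> Re (cinner v (A *\<^sub>v v)) < (\<Sum>i<n. (cmod (v $ i))^2))"
proof -
  have Vc: "V \<in> carrier_mat n n" using V unitary_mat_carrier by auto
  have aVc: "adj_mat V \<in> carrier_mat n n" using Vc by simp
  let ?y = "adj_mat V *\<^sub>v v"
  have y: "?y \<in> carrier_vec n" using aVc v mult_mat_vec_carrier[of "adj_mat V" n n v] by simp
  have f: "cinner v (A *\<^sub>v v) = complex_of_real (\<Sum>k<n. d k * (cmod (?y $ k))^2)" by (rule cinner_spectral[OF V A v])
  have "cinner ?y ?y = cinner v v" by (rule cinner_unitary[OF unitary_mat_adj[OF V] v v])
  hence ny: "(\<Sum>k<n. (cmod (?y $ k))^2) = (\<Sum>k<n. (cmod (v $ k))^2)"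
    using cinner_self[OF y] cinner_self[OF v] by (simp only: of_real_eq_iff)
  have nn: "0 \<le> (\<Sum>k<n. d k * (cmod (?y $ k))^2)" using d by (intro sum_nonneg, auto)
  have lt: "(\<Sum>k<n. d k * (cmod (?y $ k))^2) < (\<Sum>k<n. (cmod (v $ k))^2)" if v0: "v \<noteq> 0\<^sub>v n"
  proof -
    have "?y \<noteq> 0\<^sub>v n"
    proof
      assume "?y = 0\<^sub>v n"
      hence "(\<Sum>k<n. (cmod (?y $ k))^2) = 0" by simp
      hence "(\<Sum>k<n. (cmod (v $ k))^2) = 0" using ny by simp
      thus False using sum_cmod_sq_eq_0_imp_zero[OF v] v0 by simp
    qed
    then obtain j where j: "j < n" "?y $ j \<noteq> 0" using y by (metis eq_vecI index_zero_vec(1,2) carrier_vecD)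
    have "(\<Sum>k<n. (1 - d k) * (cmod (?y $ k))^2) \<ge> (1 - d j) * (cmod (?y $ j))^2"
      using j d by (intro member_le_sum, auto)
    moreover have "(1 - d j) * (cmod (?y $ j))^2 > 0" using j d by simp
    ultimately have "(\<Sum>k<n. (1 - d k) * (cmod (?y $ k))^2) > 0" by simp
    thus ?thesis using ny by (simp add: algebra_simps sum_subtractf)
  qed
  show ?thesis using f nn lt by simp
qed

lemma cinner_hermitian_square: assumes "P \<in> carrier_mat n n" "adj_mat P = P" "v \<in> carrier_vec n"
  shows "cinner v ((P * P) *\<^sub>v v) = complex_of_real (\<Sum>a<n. (cmod ((P *\<^sub>v v) $ a))^2)"
proof -
  have Pv: "P *\<^sub>v v \<in> carrier_vec n" using assms mult_mat_vec_carrier[of P n n] by simp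
  have "(P * P) *\<^sub>v v = P *\<^sub>v (P *\<^sub>v v)" using assms by (intro assoc_mult_mat_vec[of _ n n _ n], auto)
  hence "cinner v ((P * P) *\<^sub>v v) = cinner (adj_mat P *\<^sub>v v) (P *\<^sub>v v)" using cinner_adj_mat[OF assms(1,3) Pv] by simp
  also have "\<dots> = complex_of_real (\<Sum>a<n. (cmod ((P *\<^sub>v v) $ a))^2)" unfolding assms(2) by (rule cinner_self[OF Pv])
  finally show ?thesis .
qed

lemma psd_mat_spectral_iff: assumes V: "unitary_mat n V" and A: "A = V * real_diag_mat n d * adj_mat V"
  shows "psd_mat n A \<longleftrightarrow> (\<forall>k<n. d k \<ge> 0)"
proof
  assume psd: "psd_mat n A"
  show "\<forall>k<n. d k \<ge> 0"
  proof (intro allI impI)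
    fix k assume k: "k < n"
    have Vc: "V \<in> carrier_mat n n" using V unitary_mat_carrier by auto
    let ?v = "V *\<^sub>v unit_vec n k"
    have v: "?v \<in> carrier_vec n" using Vc mult_mat_vec_carrier[of V n n "unit_vec n k"] by simp
    have "cinner ?v (A *\<^sub>v ?v) = complex_of_real (d k)"
      using cinner_spectral[OF V A v] adj_unitary_mult_unitary_vec[OF V k] sum_unit_vec_cmod_sq[OF k] by simp
    moreover have "Re (cinner ?v (A *\<^sub>v ?v)) \<ge> 0" using psd v unfolding psd_mat_def cinner_def by auto
    ultimately show "d k \<ge> 0" by simp
  qed
next
  assume d: "\<forall>k<n. d k \<ge> 0"
  have Vc: "V \<in> carrier_mat n n" using V unitary_mat_carrier by auto
  have Ac: "A \<in> carrier_mat n n" unfolding A using Vc by (intro mult_mult_carrier_mat, auto)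
  have "Re (cinner v (A *\<^sub>v v)) \<ge> 0" if v: "v \<in> carrier_vec n" for v
    using cinner_spectral[OF V A v] d by (auto intro!: sum_nonneg)
  thus "psd_mat n A" unfolding psd_mat_def cinner_def[symmetric] using Ac hermitian_of_spectral[OF V A] by auto
qed

lemma psd_matD: "psd_mat n A \<Longrightarrow> A \<in> carrier_mat n n \<and> adj_mat A = A"
  by (simp add: psd_mat_def)

lemma psd_mat_spectral: assumes "psd_mat n A"
  shows "\<exists>V d. unitary_mat n V \<and> A = V * real_diag_mat n d * adj_mat V
     \<and> adj_mat V * A * V = real_diag_mat n d \<and> (\<forall>k<n. d k \<ge> 0)"
proof -
  obtain V d where V: "unitary_mat n V" and A: "A = V * real_diag_mat n d * adj_mat V"
    and D: "adj_mat V * A * V = real_diag_mat n d"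
    using hermitian_spectral_decomposition[of A n] psd_matD[OF assms] by blast
  show ?thesis using V A D psd_mat_spectral_iff[OF V A] assms by blast
qed

lemma psd_mat_form_nonneg: assumes "psd_mat n P" "v \<in> carrier_vec n"
  shows "cinner v (P *\<^sub>v v) = complex_of_real (Re (cinner v (P *\<^sub>v v))) \<and> Re (cinner v (P *\<^sub>v v)) \<ge> 0"
proof -
  obtain V d where V: "unitary_mat n V" and A: "P = V * real_diag_mat n d * adj_mat V"
    and d: "\<forall>k<n. d k \<ge> 0" using psd_mat_spectral[OF assms(1)] by blast
  show ?thesis using cinner_spectral[OF V A assms(2)] d by (auto intro!: sum_nonneg)
qed

lemma psd_mat_form_eq_0: assumes "psd_mat n P" "v \<in> carrier_vec n" "cinner v (P *\<^sub>v v) = 0"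
  shows "P *\<^sub>v v = 0\<^sub>v n"
proof -
  obtain V d where V: "unitary_mat n V" and A: "P = V * real_diag_mat n d * adj_mat V"
    and d: "\<forall>k<n. d k \<ge> 0" using psd_mat_spectral[OF assms(1)] by blast
  have Vc: "V \<in> carrier_mat n n" using V unitary_mat_carrier by auto
  have aVc: "adj_mat V \<in> carrier_mat n n" using Vc by simp
  let ?D = "real_diag_mat n d"
  let ?y = "adj_mat V *\<^sub>v v"
  have y: "?y \<in> carrier_vec n" using aVc assms(2) mult_mat_vec_carrier[of "adj_mat V" n n v] by simp
  have "complex_of_real (\<Sum>k<n. d k * (cmod (?y $ k))^2) = 0"
    by (metis cinner_spectral[OF V A assms(2)] assms(3))
  hence "(\<Sum>k<n. d k * (cmod (?y $ k))^2) = 0" by (simp only: of_real_eq_0_iff)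
  hence z: "d k * (cmod (?y $ k))^2 = 0" if "k < n" for k
    using sum_nonneg_eq_0_iff[of "{..<n}" "\<lambda>k. d k * (cmod (?y $ k))^2"] d that by auto
  have Dy: "?D *\<^sub>v ?y = 0\<^sub>v n"
  proof (rule eq_vecI)
    fix k assume "k < dim_vec (0\<^sub>v n)" hence k: "k < n" by simp
    have "d k = 0 \<or> ?y $ k = 0" using z[OF k] by auto
    thus "(?D *\<^sub>v ?y) $ k = 0\<^sub>v n $ k" using k y by (auto simp: mat_diag_mult_vec)
  qed simp
  have "P *\<^sub>v v = (V * ?D) *\<^sub>v ?y"
    unfolding A using Vc assms(2) aVc by (intro assoc_mult_mat_vec[of _ n n _ n], auto)
  also have "\<dots> = V *\<^sub>v (?D *\<^sub>v ?y)"
    using Vc y by (intro assoc_mult_mat_vec[of _ n n _ n], auto)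
  also have "\<dots> = 0\<^sub>v n" unfolding Dy using Vc by (rule mult_mat_vec_zero)
  finally show ?thesis .
qed

lemma psd_mat_sq_eq_eigenvector_zero:
  assumes P: "psd_mat n P" and Q: "psd_mat n Q" and PQ: "P * P = Q * Q"
    and x: "x \<in> carrier_vec n" and Mx: "(P - Q) *\<^sub>v x = complex_of_real c \<cdot>\<^sub>v x" and c: "c \<noteq> 0"
  shows "x = 0\<^sub>v n"
proof -
  have Pc: "P \<in> carrier_mat n n" and hP: "adj_mat P = P" and Qc: "Q \<in> carrier_mat n n"
    and hQ: "adj_mat Q = Q" using psd_matD[OF P] psd_matD[OF Q] by auto
  let ?M = "P - Q" and ?c = "complex_of_real c"
  have Mc: "?M \<in> carrier_mat n n" using Qc by (rule minus_carrier_mat)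
  have Px: "P *\<^sub>v x \<in> carrier_vec n" and Qx: "Q *\<^sub>v x \<in> carrier_vec n"
    using Pc Qc x by auto
  \<comment> \<open>\<open>P (P - Q) + (P - Q) Q = P\<^sup>2 - Q\<^sup>2 = 0\<close>, and both terms have quadratic form \<open>c\<close> times a nonnegative one.\<close>
  have PMQ: "P * ?M + ?M * Q = 0\<^sub>m n n"
  proof -
    have "P * ?M = P * P - P * Q" by (rule mult_minus_distrib_mat[OF Pc Pc Qc])
    moreover have "?M * Q = P * Q - Q * Q" using Pc Qc by (intro minus_mult_distrib_mat, auto)
    ultimately show ?thesis unfolding PQ using Pc Qc by (intro eq_matI, auto)
  qed
  have "P *\<^sub>v (?M *\<^sub>v x) + ?M *\<^sub>v (Q *\<^sub>v x) = (P * ?M + ?M * Q) *\<^sub>v x"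
    using Pc Mc Qc x by (simp add: add_mult_distrib_mat_vec[of _ n n])
  also have "\<dots> = 0\<^sub>v n" unfolding PMQ using x by (rule zero_mat_vec)
  finally have "cinner x (P *\<^sub>v (?M *\<^sub>v x)) + cinner x (?M *\<^sub>v (Q *\<^sub>v x)) = 0"
    using cinner_add_right[OF x, of "P *\<^sub>v (?M *\<^sub>v x)" "?M *\<^sub>v (Q *\<^sub>v x)"] cinner_zero_right[OF x]
      Pc Mc Qc x by auto
  moreover have "cinner x (P *\<^sub>v (?M *\<^sub>v x)) = ?c * cinner x (P *\<^sub>v x)"
    using Pc x unfolding Mx by (simp add: mult_mat_vec[of _ n n] cinner_smult_right[OF x Px])
  moreover have "cinner x (?M *\<^sub>v (Q *\<^sub>v x)) = ?c * cinner x (Q *\<^sub>v x)"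
  proof -
    have "cinner x (?M *\<^sub>v (Q *\<^sub>v x)) = cinner (adj_mat ?M *\<^sub>v x) (Q *\<^sub>v x)"
      using Mc Qc x by (simp add: cinner_adj_mat[of _ n n])
    also have "adj_mat ?M = ?M" using Pc Qc hP hQ by (simp add: adj_mat_minus)
    finally show ?thesis unfolding Mx using cinner_smult_left[OF x Qx] by simp
  qed
  ultimately have "cinner x (P *\<^sub>v x) + cinner x (Q *\<^sub>v x) = 0"
    using c by (simp add: distrib_left[symmetric])
  hence "cinner x (P *\<^sub>v x) = 0 \<and> cinner x (Q *\<^sub>v x) = 0"
    using psd_mat_form_nonneg[OF P x] psd_mat_form_nonneg[OF Q x] arg_cong[of _ _ Re]
    by (metis add_nonneg_eq_0_iff of_real_0 plus_complex.sel(1) zero_complex.sel(1))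
  hence "?M *\<^sub>v x = 0\<^sub>v n"
    using psd_mat_form_eq_0[OF P x] psd_mat_form_eq_0[OF Q x] Pc Qc x
    by (simp add: minus_mult_distrib_mat_vec)
  hence "?c * x $ i = 0" if "i < n" for i
    using arg_cong[of _ _ "\<lambda>v. v $ i"] Mx that x by (metis index_smult_vec(1) index_zero_vec(1) carrier_vecD)
  thus ?thesis using c x by (intro eq_vecI, auto)
qed

lemma psd_mat_sqrt_unique: assumes P: "psd_mat n P" and Q: "psd_mat n Q" and PQ: "P * P = Q * Q"
  shows "P = Q"
proof -
  have Pc: "P \<in> carrier_mat n n" and hP: "adj_mat P = P" using psd_matD[OF P] by auto
  have Qc: "Q \<in> carrier_mat n n" and hQ: "adj_mat Q = Q" using psd_matD[OF Q] by auto
  let ?M = "P - Q"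
  have Mc: "?M \<in> carrier_mat n n" using Qc by (rule minus_carrier_mat)
  have hM: "adj_mat ?M = ?M" using Pc Qc hP hQ by (simp add: adj_mat_minus)
  obtain V d where V: "unitary_mat n V" and Mf: "?M = V * real_diag_mat n d * adj_mat V"
    and D: "adj_mat V * ?M * V = real_diag_mat n d"
    using hermitian_spectral_decomposition[OF Mc hM] by blast
  have Vc: "V \<in> carrier_mat n n" using V unitary_mat_carrier by auto
  have "d k = 0" if k: "k < n" for k
    using psd_mat_sq_eq_eigenvector_zero[OF P Q PQ _ unitary_col_eigenvector[OF V Mc D k]]
      unitary_col_nonzero[OF V k] Vc by auto
  hence "real_diag_mat n d = 0\<^sub>m n n" by (intro mat_diag_zero, auto)
  hence "?M = 0\<^sub>m n n" using Mf Vc by simp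
  thus ?thesis using minus_eq_zero_mat_imp_eq[OF Qc Pc] by simp
qed

lemma psd_mat_sqrt_exists: assumes "psd_mat n A" shows "\<exists>P. psd_mat n P \<and> P * P = A"
proof -
  obtain V d where V: "unitary_mat n V" and A: "A = V * real_diag_mat n d * adj_mat V"
    and d: "\<forall>k<n. d k \<ge> 0" using psd_mat_spectral[OF assms] by blast
  define P where "P = V * mat_diag n (\<lambda>i. complex_of_real (sqrt (d i))) * adj_mat V"
  have "psd_mat n P" using psd_mat_spectral_iff[OF V P_def] d by simp
  moreover have "P * P = A"
  proof -
    have "P * P = V * (mat_diag n (\<lambda>i. complex_of_real (sqrt (d i))) * mat_diag n (\<lambda>i. complex_of_real (sqrt (d i)))) * adj_mat V"
      unfolding P_def by (rule unitary_conj_square[OF V], simp)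
    also have "mat_diag n (\<lambda>i. complex_of_real (sqrt (d i))) * mat_diag n (\<lambda>i. complex_of_real (sqrt (d i)))
      = real_diag_mat n d"
      unfolding mat_diag_diag
    proof (intro eq_matI)
      fix i j assume "i < dim_row (real_diag_mat n d)" "j < dim_col (real_diag_mat n d)"
      hence i: "i < n" and j: "j < n" by auto
      have "\<forall>i<n. complex_of_real (sqrt (d i)) * complex_of_real (sqrt (d i)) = complex_of_real (d i)"
        using d by (simp flip: of_real_mult)
      thus "mat_diag n (\<lambda>i. complex_of_real (sqrt (d i)) * complex_of_real (sqrt (d i))) $$ (i, j) =
         real_diag_mat n d $$ (i, j)" using i j by simp
    qed auto
    finally show ?thesis using A by simp
  qed
  ultimately show ?thesis by blast
qed

lemma psd_mat_gram: assumes Z: "Z \<in> carrier_mat n n" shows "psd_mat n (adj_mat Z * Z)"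
proof -
  have c: "adj_mat Z * Z \<in> carrier_mat n n" using mult_carrier_mat[OF adj_mat_carrier[OF Z] Z] .
  have h: "adj_mat (adj_mat Z * Z) = adj_mat Z * Z" using Z by (simp add: adj_mat_mult[of _ n n _ n])
  have "Re (cinner v ((adj_mat Z * Z) *\<^sub>v v)) \<ge> 0" if v: "v \<in> carrier_vec n" for v
  proof -
    have Zv: "Z *\<^sub>v v \<in> carrier_vec n" using Z v mult_mat_vec_carrier[of Z n n] by simp
    have "(adj_mat Z * Z) *\<^sub>v v = adj_mat Z *\<^sub>v (Z *\<^sub>v v)" using Z v
      by (intro assoc_mult_mat_vec[of _ n n _ n], auto)
    hence "cinner v ((adj_mat Z * Z) *\<^sub>v v) = cinner (Z *\<^sub>v v) (Z *\<^sub>v v)"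
      using cinner_adj_mat[of "adj_mat Z" n n v "Z *\<^sub>v v"] Z v Zv by simp
    also have "\<dots> = complex_of_real (\<Sum>i<n. (cmod ((Z *\<^sub>v v) $ i))^2)" by (rule cinner_self[OF Zv])
    finally show ?thesis by (simp add: sum_nonneg)
  qed
  thus ?thesis unfolding psd_mat_def cinner_def[symmetric] using c h by auto
qed

lemma abs_mat_psd_sqrt: assumes Z: "Z \<in> carrier_mat n n"
  shows "psd_mat n (abs_mat Z) \<and> abs_mat Z * abs_mat Z = adj_mat Z * Z"
proof -
  obtain P0 where P0: "psd_mat n P0 \<and> P0 * P0 = adj_mat Z * Z"
    using psd_mat_sqrt_exists[OF psd_mat_gram[OF Z]] by blast
  have ex: "\<exists>!P. psd_mat n P \<and> P * P = adj_mat Z * Z"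
  proof (rule ex1I[of _ P0])
    fix Q assume "psd_mat n Q \<and> Q * Q = adj_mat Z * Z"
    thus "Q = P0" using P0 psd_mat_sqrt_unique[of n Q P0] by simp
  qed (rule P0)
  have "dim_col Z = n" using Z by simp
  thus ?thesis unfolding abs_mat_def using theI'[OF ex] by simp
qed

section \<open>Determinants of positive definite matrices\<close>

definition single_col_mat :: "nat \<Rightarrow> nat \<Rightarrow> complex vec \<Rightarrow> complex mat" where
  "single_col_mat n k u = mat n n (\<lambda>(i,j). if j = k then u $ i else 0)"

lemma single_col_mat_carrier[simp]: "single_col_mat n k u \<in> carrier_mat n n" by (simp add: single_col_mat_def)

lemma single_col_mat_unit_vec: assumes k: "k < n"
  shows "single_col_mat n k (c \<cdot>\<^sub>v unit_vec n k) = mat_diag n (\<lambda>i. if i = k then c else 0)"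
  using k by (intro eq_matI, auto simp: single_col_mat_def unit_vec_def)

lemma det_add_single_col_mat: assumes M: "M \<in> carrier_mat n n" and x: "x \<in> carrier_vec n" and k: "k < n"
  shows "det (M + single_col_mat n k (M *\<^sub>v x)) = det M * (1 + x $ k)"
proof -
  let ?u = "M *\<^sub>v x"
  let ?M' = "M + single_col_mat n k ?u"
  have M'c: "?M' \<in> carrier_mat n n" using M by simp
  have u: "?u \<in> carrier_vec n" using M x mult_mat_vec_carrier[of M n n x] by simp
  have del: "mat_delete ?M' i k = mat_delete M i k" if i: "i < n" for i
    using M i k by (intro eq_matI, auto simp: mat_delete_def single_col_mat_def)
  have "det ?M' = (\<Sum>i<n. ?M' $$ (i,k) * cofactor ?M' i k)"
    by (rule laplace_expansion_column[OF M'c k])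
  also have "\<dots> = (\<Sum>i<n. M $$ (i,k) * cofactor M i k + ?u $ i * cofactor M i k)"
  proof (intro sum.cong refl)
    fix i assume "i \<in> {..<n}" hence i: "i < n" by simp
    have cof: "cofactor ?M' i k = cofactor M i k" unfolding cofactor_def del[OF i] ..
    have "?M' $$ (i,k) = M $$ (i,k) + ?u $ i" using M i k by (simp add: single_col_mat_def)
    thus "?M' $$ (i,k) * cofactor ?M' i k = M $$ (i,k) * cofactor M i k + ?u $ i * cofactor M i k"
      unfolding cof by (simp add: algebra_simps)
  qed
  also have "\<dots> = det M + (\<Sum>i<n. ?u $ i * cofactor M i k)"
    by (simp add: sum.distrib laplace_expansion_column[OF M k])
  also have "(\<Sum>i<n. ?u $ i * cofactor M i k) = (Determinant.adj_mat M *\<^sub>v ?u) $ k"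
  proof -
    have aM: "Determinant.adj_mat M \<in> carrier_mat n n" using Determinant.adj_mat(1)[OF M] .
    have "(Determinant.adj_mat M *\<^sub>v ?u) $ k = (\<Sum>i<n. Determinant.adj_mat M $$ (k,i) * ?u $ i)"
      using aM u k by (intro mult_mat_vec_index_sum, auto)
    also have "\<dots> = (\<Sum>i<n. ?u $ i * cofactor M i k)"
      using M k by (intro sum.cong refl, auto simp: Determinant.adj_mat_def mult.commute)
    finally show ?thesis by simp
  qed
  also have "Determinant.adj_mat M *\<^sub>v ?u = (Determinant.adj_mat M * M) *\<^sub>v x"
    using Determinant.adj_mat(1)[OF M] M x by (intro assoc_mult_mat_vec[symmetric, of _ n n _ n], auto)
  also have "\<dots> = det M \<cdot>\<^sub>v x" unfolding Determinant.adj_mat(3)[OF M] by (rule smult_one_mat_mult_vec[OF x])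
  finally show ?thesis using x k by (simp add: algebra_simps)
qed

lemma det_nonzero_solvable: assumes M: "(M :: complex mat) \<in> carrier_mat n n" and d: "det M \<noteq> 0" and u: "u \<in> carrier_vec n"
  shows "\<exists>x \<in> carrier_vec n. M *\<^sub>v x = u"
proof -
  define x where "x = (1 / det M) \<cdot>\<^sub>v (Determinant.adj_mat M *\<^sub>v u)"
  have aM: "Determinant.adj_mat M \<in> carrier_mat n n" using Determinant.adj_mat(1)[OF M] .
  have au: "Determinant.adj_mat M *\<^sub>v u \<in> carrier_vec n" using aM u mult_mat_vec_carrier[of _ n n u] by simp
  have x: "x \<in> carrier_vec n" unfolding x_def using au by simp
  have "M *\<^sub>v x = (1 / det M) \<cdot>\<^sub>v (M *\<^sub>v (Determinant.adj_mat M *\<^sub>v u))"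
    unfolding x_def using M au by (intro mult_mat_vec[of _ n n], auto)
  also have "M *\<^sub>v (Determinant.adj_mat M *\<^sub>v u) = (M * Determinant.adj_mat M) *\<^sub>v u"
    using M aM u by (intro assoc_mult_mat_vec[symmetric, of _ n n _ n], auto)
  also have "\<dots> = det M \<cdot>\<^sub>v u" unfolding Determinant.adj_mat(2)[OF M] by (rule smult_one_mat_mult_vec[OF u])
  finally have "M *\<^sub>v x = u" using d u by (simp add: smult_smult_assoc)
  thus ?thesis using x by blast
qed

definition pd_mat :: "nat \<Rightarrow> complex mat \<Rightarrow> bool" where
  "pd_mat n X \<longleftrightarrow> X \<in> carrier_mat n n \<and> adj_mat X = X \<and>
     (\<forall>v \<in> carrier_vec n. v \<noteq> 0\<^sub>v n \<longrightarrow> Re (cinner v (X *\<^sub>v v)) > 0)"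

lemma pd_mat_det_pos: assumes "pd_mat n X" shows "\<exists>r>0. det X = complex_of_real r"
proof -
  have Xc: "X \<in> carrier_mat n n" and hX: "adj_mat X = X" using assms unfolding pd_mat_def by auto
  obtain V d where V: "unitary_mat n V" and A: "X = V * real_diag_mat n d * adj_mat V"
    using hermitian_spectral_decomposition[OF Xc hX] by blast
  have Vc: "V \<in> carrier_mat n n" using V unitary_mat_carrier by auto
  have dpos: "d k > 0" if k: "k < n" for k
  proof -
    have v: "V *\<^sub>v unit_vec n k \<in> carrier_vec n" using Vc mult_mat_vec_carrier[of V n n "unit_vec n k"] by simp
    have "Re (cinner (V *\<^sub>v unit_vec n k) (X *\<^sub>v (V *\<^sub>v unit_vec n k))) > 0"
      using assms v unitary_col_nonzero[OF V k] unfolding pd_mat_def by blast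
    thus ?thesis using cinner_unitary_col_spectral[OF V A k] by simp
  qed
  have "det X = det (real_diag_mat n d)" unfolding A by (rule det_unitary_conj[OF V], simp)
  also have "\<dots> = complex_of_real (\<Prod>k<n. d k)" by (simp add: det_mat_diag)
  finally show ?thesis using dpos by (intro exI[of _ "\<Prod>k<n. d k"], auto intro!: prod_pos)
qed

lemma pd_mat_solution_diag_pos: assumes B: "pd_mat n B" and k: "k < n" and x: "x \<in> carrier_vec n"
  and Bx: "B *\<^sub>v x = unit_vec n k"
  shows "Re (x $ k) > 0 \<and> x $ k = complex_of_real (Re (x $ k))"
proof -
  have Bc: "B \<in> carrier_mat n n" and hB: "adj_mat B = B" using B unfolding pd_mat_def by auto
  have x0: "x \<noteq> 0\<^sub>v n"
  proof
    assume xz: "x = 0\<^sub>v n"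
    have "B *\<^sub>v x = 0\<^sub>v n" unfolding xz by (rule mult_mat_vec_zero[OF Bc])
    hence "(unit_vec n k :: complex vec) $ k = 0\<^sub>v n $ k" using Bx by simp
    thus False using k by simp
  qed
  have "cinner x (B *\<^sub>v x) = cinner (adj_mat B *\<^sub>v x) x" using Bc x by (intro cinner_adj_mat[of _ n n], auto)
  also have "\<dots> = x $ k" unfolding hB Bx using cinner_unit_vec_left[OF x k] .
  finally have e: "cinner x (B *\<^sub>v x) = x $ k" .
  have "Re (cinner x (B *\<^sub>v x)) > 0" using B x x0 unfolding pd_mat_def by blast
  thus ?thesis using hermitian_form_real[OF Bc hB x] e by simp
qed

lemma pd_mat_add_real_diag_mat: assumes B: "pd_mat n B" and c: "\<forall>k<n. c k \<ge> 0"
  shows "pd_mat n (B + real_diag_mat n c)"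
proof -
  have Bc: "B \<in> carrier_mat n n" and hB: "adj_mat B = B" using B unfolding pd_mat_def by auto
  let ?D = "real_diag_mat n c"
  have "Re (cinner v ((B + ?D) *\<^sub>v v)) > 0" if v: "v \<in> carrier_vec n" and v0: "v \<noteq> 0\<^sub>v n" for v
  proof -
    have "(B + ?D) *\<^sub>v v = B *\<^sub>v v + ?D *\<^sub>v v" using Bc v by (intro add_mult_distrib_mat_vec, auto)
    hence "cinner v ((B + ?D) *\<^sub>v v) = cinner v (B *\<^sub>v v) + cinner v (?D *\<^sub>v v)"
      using cinner_add_right[OF v, of "B *\<^sub>v v" "?D *\<^sub>v v"] Bc v mult_mat_vec_carrier[of B n n v]
        mult_mat_vec_carrier[of ?D n n v] by simp
    moreover have "Re (cinner v (B *\<^sub>v v)) > 0" using B v v0 unfolding pd_mat_def by blast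
    moreover have "Re (cinner v (?D *\<^sub>v v)) \<ge> 0" using cinner_real_diag_mat[OF v, of c] c by (auto intro!: sum_nonneg)
    ultimately show ?thesis by simp
  qed
  moreover have "adj_mat (B + ?D) = B + ?D" using Bc hB by (simp add: adj_mat_add[of _ n n] adj_mat_real_diag_mat)
  ultimately show ?thesis unfolding pd_mat_def using Bc by auto
qed

lemma det_pd_mat_add_diag_entry:
  assumes B: "pd_mat n B" and j: "j < n"
  obtains t where "t > 0"
    and "\<And>c. det (B + mat_diag n (\<lambda>i. if i = j then complex_of_real c else 0)) = det B * complex_of_real (1 + c * t)"
proof -
  have Bc: "B \<in> carrier_mat n n" using B unfolding pd_mat_def by auto
  have "det B \<noteq> 0" using pd_mat_det_pos[OF B] by auto
  then obtain x where x: "x \<in> carrier_vec n" and Bx: "B *\<^sub>v x = unit_vec n j"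
    using det_nonzero_solvable[OF Bc _ unit_vec_carrier, of j] by auto
  have xj: "Re (x $ j) > 0 \<and> x $ j = complex_of_real (Re (x $ j))" by (rule pd_mat_solution_diag_pos[OF B j x Bx])
  \<comment> \<open>Cramer's rule: the increment of \<open>det B\<close> is \<open>c\<close> times the \<open>(j, j)\<close> entry \<open>x\<^sub>j\<close> of \<open>B\<^sup>-\<^sup>1\<close>.\<close>
  have "det (B + mat_diag n (\<lambda>i. if i = j then complex_of_real c else 0)) = det B * complex_of_real (1 + c * Re (x $ j))"
    for c
  proof -
    have "B *\<^sub>v (complex_of_real c \<cdot>\<^sub>v x) = complex_of_real c \<cdot>\<^sub>v unit_vec n j"
      unfolding Bx[symmetric] using Bc x by (intro mult_mat_vec[of _ n n], auto)
    hence "B + mat_diag n (\<lambda>i. if i = j then complex_of_real c else 0) = B + single_col_mat n j (B *\<^sub>v (complex_of_real c \<cdot>\<^sub>v x))"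
      using single_col_mat_unit_vec[OF j] by simp
    thus ?thesis using det_add_single_col_mat[OF Bc _ j, of "complex_of_real c \<cdot>\<^sub>v x"] x j xj
      by (simp add: of_real_mult)
  qed
  thus ?thesis using that xj by blast
qed

lemma det_pd_mat_add_real_diag_mat_ge_aux:
  assumes B: "pd_mat n B" and c: "\<forall>k<n. c k \<ge> 0" and "j \<le> n"
  shows "\<exists>r. det (B + real_diag_mat n (\<lambda>i. if i < j then c i else 0)) = complex_of_real r
      \<and> r \<ge> Re (det B) \<and> (r = Re (det B) \<longrightarrow> (\<forall>k<j. c k = 0))"
  using \<open>j \<le> n\<close>
proof (induction j)
  case 0
  have "real_diag_mat n (\<lambda>i. if i < 0 then c i else 0) = 0\<^sub>m n n" by (intro eq_matI, auto)
  moreover have Bc: "B \<in> carrier_mat n n" using B unfolding pd_mat_def by auto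
  moreover obtain r where "det B = complex_of_real r" using pd_mat_det_pos[OF B] by auto
  ultimately show ?case by (intro exI[of _ r], simp)
next
  case (Suc j)
  hence j: "j < n" by simp
  let ?B' = "B + real_diag_mat n (\<lambda>i. if i < j then c i else 0)"
  from Suc.IH j obtain r where r: "det ?B' = complex_of_real r"
    and rge: "r \<ge> Re (det B)" and req: "r = Re (det B) \<longrightarrow> (\<forall>k<j. c k = 0)" by auto
  have Bc: "B \<in> carrier_mat n n" using B unfolding pd_mat_def by auto
  have pdB': "pd_mat n ?B'" using pd_mat_add_real_diag_mat[OF B] c by simp
  obtain t where t: "t > 0"
    and dt: "\<And>a. det (?B' + mat_diag n (\<lambda>i. if i = j then complex_of_real a else 0)) = det ?B' * complex_of_real (1 + a * t)"
    using det_pd_mat_add_diag_entry[OF pdB' j] by blast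
  have "?B' + mat_diag n (\<lambda>i. if i = j then complex_of_real (c j) else 0) = B + real_diag_mat n (\<lambda>i. if i < Suc j then c i else 0)"
    using Bc by (auto simp: assoc_add_mat[of _ n n] mat_diag_add intro!: arg_cong[of _ _ "\<lambda>f. B + mat_diag n f"])
  hence eq: "det (B + real_diag_mat n (\<lambda>i. if i < Suc j then c i else 0)) = complex_of_real (r * (1 + c j * t))"
    using dt[of "c j"] r by simp
  have r0: "r > 0" using r pd_mat_det_pos[OF pdB'] by auto
  have "r * (c j * t) \<ge> 0" using r0 t c j by simp
  hence ge: "r * (1 + c j * t) \<ge> r" by (simp add: algebra_simps)
  show ?case
  proof (intro exI[of _ "r * (1 + c j * t)"] conjI impI allI)
    show "det (B + real_diag_mat n (\<lambda>i. if i < Suc j then c i else 0)) = complex_of_real (r * (1 + c j * t))" by (rule eq)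
    show "Re (det B) \<le> r * (1 + c j * t)" using ge rge by simp
    fix k assume e: "r * (1 + c j * t) = Re (det B)" and k: "k < Suc j"
    hence "r = Re (det B)" and "r * (c j * t) = 0" using ge rge by (auto simp: algebra_simps)
    thus "c k = 0" using req r0 t k by (cases "k < j") (auto simp: less_Suc_eq)
  qed
qed

lemma pd_mat_adj_unitary_conj: assumes V: "unitary_mat n V" and X: "pd_mat n X"
  shows "pd_mat n (adj_mat V * X * V)"
proof -
  have Vc: "V \<in> carrier_mat n n" using V unitary_mat_carrier by auto
  have aVc: "adj_mat V \<in> carrier_mat n n" using Vc by simp
  have Xc: "X \<in> carrier_mat n n" and hX: "adj_mat X = X" using X unfolding pd_mat_def by auto
  let ?B = "adj_mat V * X * V"
  have Bc: "?B \<in> carrier_mat n n" using mult_mult_carrier_mat[OF aVc Xc Vc] .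
  have "adj_mat ?B = adj_mat V * adj_mat (adj_mat V * X)"
    using aVc Xc Vc by (intro adj_mat_mult[of _ n n _ n], auto)
  also have "adj_mat (adj_mat V * X) = adj_mat X * V" using aVc Xc by (simp add: adj_mat_mult[of _ n n _ n])
  finally have hB: "adj_mat ?B = ?B" unfolding hX using aVc Xc Vc by (simp add: assoc_mult_mat[of _ n n _ n _ n])
  have "Re (cinner v (?B *\<^sub>v v)) > 0" if v: "v \<in> carrier_vec n" and v0: "v \<noteq> 0\<^sub>v n" for v
  proof -
    have Vv: "V *\<^sub>v v \<in> carrier_vec n" using Vc v mult_mat_vec_carrier[of V n n v] by simp
    have XVv: "X *\<^sub>v (V *\<^sub>v v) \<in> carrier_vec n" using Xc Vv mult_mat_vec_carrier[of X n n] by simp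
    have "?B *\<^sub>v v = (adj_mat V * X) *\<^sub>v (V *\<^sub>v v)" using aVc Xc Vc v by (intro assoc_mult_mat_vec[of _ n n _ n], auto)
    also have "\<dots> = adj_mat V *\<^sub>v (X *\<^sub>v (V *\<^sub>v v))" using aVc Xc Vv by (intro assoc_mult_mat_vec[of _ n n _ n], auto)
    finally have "cinner v (?B *\<^sub>v v) = cinner v (adj_mat V *\<^sub>v (X *\<^sub>v (V *\<^sub>v v)))" by simp
    also have "\<dots> = cinner (V *\<^sub>v v) (X *\<^sub>v (V *\<^sub>v v))" using cinner_adj_mat[OF aVc v XVv] by simp
    finally have e: "cinner v (?B *\<^sub>v v) = cinner (V *\<^sub>v v) (X *\<^sub>v (V *\<^sub>v v))" .
    have "V *\<^sub>v v \<noteq> 0\<^sub>v n"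
    proof
      assume z: "V *\<^sub>v v = 0\<^sub>v n"
      have "cinner (V *\<^sub>v v) (V *\<^sub>v v) = cinner v v" by (rule cinner_unitary[OF V v v])
      hence "cinner v v = 0" unfolding z using cinner_zero_right[of "0\<^sub>v n" n] by simp
      hence "complex_of_real (\<Sum>i<n. (cmod (v $ i))^2) = 0" by (metis cinner_self[OF v])
      hence "(\<Sum>i<n. (cmod (v $ i))^2) = 0" by (simp only: of_real_eq_0_iff)
      thus False using sum_cmod_sq_eq_0_imp_zero[OF v] v0 by simp
    qed
    thus ?thesis unfolding e using X Vv unfolding pd_mat_def by blast
  qed
  thus ?thesis unfolding pd_mat_def using Bc hB by auto
qed

lemma det_pd_mat_le: assumes X: "pd_mat n X" and Yc: "Y \<in> carrier_mat n n" and D: "psd_mat n (Y - X)"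
  shows "\<exists>rx ry. det X = complex_of_real rx \<and> det Y = complex_of_real ry \<and> 0 < rx \<and> rx \<le> ry
     \<and> (rx = ry \<longrightarrow> X = Y)"
proof -
  have Xc: "X \<in> carrier_mat n n" and hX: "adj_mat X = X" using X unfolding pd_mat_def by auto
  obtain V c where V: "unitary_mat n V" and Df: "Y - X = V * real_diag_mat n c * adj_mat V"
    and Dd: "adj_mat V * (Y - X) * V = real_diag_mat n c" and c: "\<forall>k<n. c k \<ge> 0"
    using psd_mat_spectral[OF D] by blast
  have Vc: "V \<in> carrier_mat n n" using V unitary_mat_carrier by auto
  have aVc: "adj_mat V \<in> carrier_mat n n" using Vc by simp
  let ?B = "adj_mat V * X * V"
  let ?C = "real_diag_mat n c"
  have pdB: "pd_mat n ?B" by (rule pd_mat_adj_unitary_conj[OF V X])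
  have YXD: "Y = X + (Y - X)"
  proof (rule eq_matI)
    fix i j assume "i < dim_row (X + (Y - X))" "j < dim_col (X + (Y - X))"
    hence i: "i < n" and j: "j < n" using Xc by auto
    show "Y $$ (i,j) = (X + (Y - X)) $$ (i,j)" using Xc Yc i j by simp
  qed (use Xc Yc in auto)
  have DC: "Y - X \<in> carrier_mat n n" using Xc by (rule minus_carrier_mat)
  have "adj_mat V * Y * V = adj_mat V * (X + (Y - X)) * V" by (simp only: YXD[symmetric])
  also have "adj_mat V * (X + (Y - X)) = adj_mat V * X + adj_mat V * (Y - X)"
    by (rule mult_add_distrib_mat[OF aVc Xc DC])
  also have "(adj_mat V * X + adj_mat V * (Y - X)) * V = ?B + adj_mat V * (Y - X) * V"
    by (rule add_mult_distrib_mat[OF mult_carrier_mat[OF aVc Xc] mult_carrier_mat[OF aVc DC] Vc])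
  finally have YB: "adj_mat V * Y * V = ?B + ?C" unfolding Dd .
  have dY: "det Y = det (?B + ?C)" unfolding YB[symmetric] by (rule det_adj_unitary_conj[OF V Yc, symmetric])
  have dX: "det X = det ?B" by (rule det_adj_unitary_conj[OF V Xc, symmetric])
  have ce: "mat_diag n (\<lambda>i. complex_of_real (if i < n then c i else 0)) = ?C" by (intro eq_matI, auto)
  have "\<exists>r. det (?B + ?C) = complex_of_real r \<and> r \<ge> Re (det ?B) \<and> (r = Re (det ?B) \<longrightarrow> (\<forall>k<n. c k = 0))"
    using det_pd_mat_add_real_diag_mat_ge_aux[OF pdB c order.refl] unfolding ce by simp
  then obtain r where r: "det (?B + ?C) = complex_of_real r" and rge: "r \<ge> Re (det ?B)"
    and req: "r = Re (det ?B) \<longrightarrow> (\<forall>k<n. c k = 0)" by blast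
  obtain rx where rx: "rx > 0" "det ?B = complex_of_real rx" using pd_mat_det_pos[OF pdB] by auto
  show ?thesis
  proof (rule exI[of _ rx], rule exI[of _ r], intro conjI impI)
    show "det X = complex_of_real rx" using dX rx by simp
    show "det Y = complex_of_real r" using dY r by simp
    show "0 < rx" by fact
    show "rx \<le> r" using rge rx by simp
    assume "rx = r"
    hence "\<forall>k<n. c k = 0" using req rx by simp
    hence "?C = 0\<^sub>m n n" by (intro mat_diag_zero, auto)
    hence "Y - X = 0\<^sub>m n n" unfolding Df using Vc by simp
    thus "X = Y" using minus_eq_zero_mat_imp_eq[OF Xc Yc] by simp
  qed
qed

section \<open>Lower bound for the determinant of 1 - U W\<close>

lemma cmod_one_minus_of_real_mult_ge: assumes "0 \<le> s" "cmod x \<le> 1"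
  shows "cmod (1 - complex_of_real s * x) \<ge> 1 - s"
proof -
  have "Re x \<le> 1" using complex_Re_le_cmod[of x] assms by linarith
  hence "1 - s \<le> 1 - s * Re x" using assms by (simp add: mult_left_le)
  also have "1 - s * Re x = Re (1 - complex_of_real s * x)" by simp
  also have "\<dots> \<le> cmod (1 - complex_of_real s * x)" by (rule complex_Re_le_cmod)
  finally show ?thesis .
qed

lemma cmod_one_minus_of_real_mult_eq_imp: assumes "0 < s" "cmod x \<le> 1" "cmod (1 - complex_of_real s * x) = 1 - s"
  shows "x = 1"
proof -
  have "Re (1 - complex_of_real s * x) \<le> 1 - s" using complex_Re_le_cmod[of "1 - complex_of_real s * x"] assms(3) by simp
  hence "s * Re x \<ge> s" by simp
  hence r1: "Re x \<ge> 1" using assms(1) by simp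
  have "Re x \<le> 1" using complex_Re_le_cmod[of x] assms by linarith
  hence re: "Re x = 1" using r1 by simp
  have "(cmod x)^2 = (Re x)^2 + (Im x)^2" by (simp add: cmod_power2)
  moreover have "(cmod x)^2 \<le> 1" using assms(2) norm_ge_zero[of x] by (simp add: power_le_one)
  ultimately have "(Im x)^2 \<le> 0" using re by simp
  hence "Im x = 0" by simp
  thus ?thesis using re by (simp add: complex_eq_iff)
qed

lemma mult_eq_mult_lower_bounds: fixes a b A B :: real
  assumes "0 < A" "A \<le> a" "0 < B" "B \<le> b" "a * b = A * B"
  shows "a = A \<and> b = B"
proof -
  have "a * b \<ge> a * B" using assms by (intro mult_left_mono, auto)
  moreover have "a * B \<ge> A * B" using assms by (intro mult_right_mono, auto)
  ultimately have "a * B = A * B" using assms(5) by simp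
  hence aA: "a = A" using assms(3) by simp
  hence "b = B" using assms(1,5) by simp
  thus ?thesis using aA by simp
qed

lemma unitary_resolvent_col_bound:
  assumes C: "unitary_mat n C" and j: "j < n" and d: "\<forall>k<n. 0 \<le> d k \<and> d k < 1" and dj: "d j = 0"
    and x: "x \<in> carrier_vec n" and Mx: "(1\<^sub>m n - C * real_diag_mat n d) *\<^sub>v x = C *\<^sub>v unit_vec n j"
  shows "cmod (x $ j) \<le> 1" and "x $ j = 1 \<Longrightarrow> C *\<^sub>v unit_vec n j = unit_vec n j"
proof -
  have Cc: "C \<in> carrier_mat n n" using C unitary_mat_carrier by auto
  let ?D = "real_diag_mat n d"
  define y where "y = unit_vec n j + ?D *\<^sub>v x"
  have y: "y \<in> carrier_vec n" unfolding y_def using mult_mat_vec_carrier[OF mat_diag_dim x] by simp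
  \<comment> \<open>\<open>x = C y\<close> with \<open>y\<^sub>j = 1\<close> and \<open>y\<^sub>k = d\<^sub>k x\<^sub>k\<close> otherwise, so \<open>\<parallel>x\<parallel> = \<parallel>y\<parallel>\<close> forces \<open>\<bar>x\<^sub>j\<bar> \<le> 1\<close>.\<close>
  have xCy: "x = C *\<^sub>v y"
  proof -
    have Mx': "x - C *\<^sub>v (?D *\<^sub>v x) = C *\<^sub>v unit_vec n j"
      using Mx Cc x by (simp add: minus_mult_distrib_mat_vec[of _ n n] assoc_mult_mat_vec[OF Cc mat_diag_dim x])
    have "C *\<^sub>v y = C *\<^sub>v unit_vec n j + C *\<^sub>v (?D *\<^sub>v x)"
      unfolding y_def using Cc mult_mat_vec_carrier[OF mat_diag_dim x] by (simp add: mult_add_distrib_mat_vec[of _ n n])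
    also have "\<dots> = x" unfolding Mx'[symmetric] using Cc x by (intro eq_vecI) auto
    finally show ?thesis ..
  qed
  have nrm: "(\<Sum>k<n. (cmod (x $ k))^2) = (\<Sum>k<n. (cmod (y $ k))^2)"
    using cinner_unitary[OF C y y] cinner_self[OF x] cinner_self[OF y] unfolding xCy[symmetric]
    by (simp only: of_real_eq_iff)
  have yk: "y $ k = (if k = j then 1 else complex_of_real (d k) * x $ k)" if "k < n" for k
    unfolding y_def using that x dj by (simp add: mat_diag_mult_vec unit_vec_def)
  define f where "f = (\<lambda>k. (cmod (x $ k))^2 - (cmod (y $ k))^2)"
  have "(\<Sum>k<n. f k) = 0" unfolding f_def using nrm by (simp add: sum_subtractf)
  hence fsum: "f j + (\<Sum>k\<in>{..<n} - {j}. f k) = 0" using j by (simp add: sum.remove)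
  have fk: "f k = (1 - (d k)^2) * (cmod (x $ k))^2" if "k \<in> {..<n} - {j}" for k
    unfolding f_def using yk that by (simp add: norm_mult power_mult_distrib algebra_simps)
  have fk0: "f k \<ge> 0" if "k \<in> {..<n} - {j}" for k
  proof -
    have "(d k)^2 \<le> 1" using d that by (intro power_le_one) auto
    thus ?thesis using fk[OF that] by simp
  qed
  have fj: "f j = (cmod (x $ j))^2 - 1" unfolding f_def using yk[OF j] by simp
  have "(\<Sum>k\<in>{..<n} - {j}. f k) \<ge> 0" using fk0 by (intro sum_nonneg) auto
  hence "(cmod (x $ j))^2 \<le> 1" using fsum fj by simp
  thus "cmod (x $ j) \<le> 1" by (simp add: power_le_one_iff)
  assume x1: "x $ j = 1"
  have "f k = 0" if "k \<in> {..<n} - {j}" for k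
    using fsum fj x1 fk0 that sum_nonneg_eq_0_iff[of "{..<n} - {j}" f] by simp
  moreover have "(d k)^2 < 1" if "k < n" for k using d that by (simp add: power_less_one_iff abs_less_iff)
  ultimately have "x $ k = 0" if "k < n" "k \<noteq> j" for k
    using fk[of k] that by fastforce
  hence xe: "x = unit_vec n j" using x x1 by (intro eq_vecI) (auto simp: unit_vec_def)
  have "?D *\<^sub>v unit_vec n j = 0\<^sub>v n" using j dj by (intro eq_vecI, auto simp: mat_diag_mult_vec)
  hence "y = unit_vec n j" unfolding y_def xe by simp
  thus "C *\<^sub>v unit_vec n j = unit_vec n j" using xCy xe by simp
qed

lemma det_one_minus_mult_diag_update:
  assumes Cc: "C \<in> carrier_mat n n" and j: "j < n" and dj: "d j = 0"
    and x: "x \<in> carrier_vec n" and Mx: "(1\<^sub>m n - C * real_diag_mat n d) *\<^sub>v x = C *\<^sub>v unit_vec n j"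
  shows "det (1\<^sub>m n - C * real_diag_mat n (d(j := t)))
    = det (1\<^sub>m n - C * real_diag_mat n d) * (1 - complex_of_real t * x $ j)"
proof -
  let ?M = "1\<^sub>m n - C * real_diag_mat n d" and ?c = "- complex_of_real t"
  have Mc: "?M \<in> carrier_mat n n" using mult_carrier_mat[OF Cc mat_diag_dim] by (rule minus_carrier_mat)
  \<comment> \<open>Raising the \<open>j\<close>-th diagonal entry from \<open>0\<close> to \<open>t\<close> subtracts \<open>t C e\<^sub>j = M (t x)\<close> from column \<open>j\<close>.\<close>
  have Mcx: "?M *\<^sub>v (?c \<cdot>\<^sub>v x) = ?c \<cdot>\<^sub>v (C *\<^sub>v unit_vec n j)"
    unfolding Mx[symmetric] using Mc x by (intro mult_mat_vec[of _ n n], auto)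
  have "1\<^sub>m n - C * real_diag_mat n (d(j := t)) = ?M + single_col_mat n j (?M *\<^sub>v (?c \<cdot>\<^sub>v x))"
  proof (rule eq_matI)
    fix a b assume "a < dim_row (?M + single_col_mat n j (?M *\<^sub>v (?c \<cdot>\<^sub>v x)))"
      "b < dim_col (?M + single_col_mat n j (?M *\<^sub>v (?c \<cdot>\<^sub>v x)))"
    hence a: "a < n" and b: "b < n" by (auto simp: single_col_mat_def)
    show "(1\<^sub>m n - C * real_diag_mat n (d(j := t))) $$ (a,b) = (?M + single_col_mat n j (?M *\<^sub>v (?c \<cdot>\<^sub>v x))) $$ (a,b)"
      unfolding Mcx using a b j dj Cc mult_mat_diag_index[OF Cc a b] mult_mat_vec_unit_vec_index[OF Cc a j]
      by (auto simp: single_col_mat_def)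
  qed (use Cc in \<open>auto simp: single_col_mat_def\<close>)
  thus ?thesis using det_add_single_col_mat[OF Mc _ j, of "?c \<cdot>\<^sub>v x"] x j by simp
qed

lemma cmod_det_one_minus_mult_diag_ge_aux:
  assumes C: "unitary_mat n C" and s: "\<forall>k<n. 0 \<le> s k \<and> s k < 1" and "j \<le> n"
  defines "D \<equiv> real_diag_mat n (\<lambda>k. if k < j then s k else 0)"
  shows "cmod (det (1\<^sub>m n - C * D)) \<ge> (\<Prod>k<j. 1 - s k) \<and>
    (cmod (det (1\<^sub>m n - C * D)) = (\<Prod>k<j. 1 - s k) \<longrightarrow> (\<forall>k<j. s k > 0 \<longrightarrow> C *\<^sub>v unit_vec n k = unit_vec n k))"
  using \<open>j \<le> n\<close> unfolding D_def
proof (induction j)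
  case 0
  have Cc: "C \<in> carrier_mat n n" using C unitary_mat_carrier by auto
  have "real_diag_mat n (\<lambda>k. if k < 0 then s k else 0) = 0\<^sub>m n n" by (intro eq_matI, auto)
  moreover have "1\<^sub>m n - 0\<^sub>m n n = (1\<^sub>m n :: complex mat)" by (intro eq_matI, auto)
  ultimately show ?case using Cc by simp
next
  case (Suc j)
  hence j: "j < n" by simp
  have Cc: "C \<in> carrier_mat n n" using C unitary_mat_carrier by auto
  define d where "d = (\<lambda>k. if k < j then s k else 0)"
  let ?M = "1\<^sub>m n - C * real_diag_mat n d"
  let ?A = "\<Prod>k<j. 1 - s k"
  have IH1: "cmod (det ?M) \<ge> ?A"
    and IH2: "cmod (det ?M) = ?A \<longrightarrow> (\<forall>k<j. s k > 0 \<longrightarrow> C *\<^sub>v unit_vec n k = unit_vec n k)"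
    using Suc.IH j unfolding d_def by auto
  have d: "\<forall>k<n. 0 \<le> d k \<and> d k < 1" and dj: "d j = 0" using s by (auto simp: d_def)
  have Apos: "?A > 0" using s j by (intro prod_pos, auto)
  have Mc: "?M \<in> carrier_mat n n" using mult_carrier_mat[OF Cc mat_diag_dim] by (rule minus_carrier_mat)
  have "det ?M \<noteq> 0" using IH1 Apos by auto
  then obtain x where x: "x \<in> carrier_vec n" and Mx: "?M *\<^sub>v x = C *\<^sub>v unit_vec n j"
    using det_nonzero_solvable[OF Mc, of "C *\<^sub>v unit_vec n j"] Cc by auto
  have upd: "real_diag_mat n (\<lambda>k. if k < Suc j then s k else 0) = real_diag_mat n (d(j := s j))"
    by (intro eq_matI) (auto simp: d_def)
  have detnew: "det (1\<^sub>m n - C * real_diag_mat n (d(j := s j))) = det ?M * (1 - complex_of_real (s j) * x $ j)"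
    by (rule det_one_minus_mult_diag_update[OF Cc j dj x Mx])
  have xj1: "cmod (x $ j) \<le> 1" by (rule unitary_resolvent_col_bound(1)[OF C j d dj x Mx])
  have B: "cmod (1 - complex_of_real (s j) * x $ j) \<ge> 1 - s j" "1 - s j > 0"
    using cmod_one_minus_of_real_mult_ge[OF _ xj1] s j by auto
  show ?case unfolding upd
  proof (intro conjI impI allI)
    show "(\<Prod>k<Suc j. 1 - s k) \<le> cmod (det (1\<^sub>m n - C * real_diag_mat n (d(j := s j))))"
      unfolding detnew norm_mult using IH1 Apos B by (simp add: mult_mono)
  next
    fix k assume "cmod (det (1\<^sub>m n - C * real_diag_mat n (d(j := s j)))) = (\<Prod>k<Suc j. 1 - s k)"
      and k: "k < Suc j" and sk: "s k > 0"
    hence eq: "cmod (det ?M) = ?A" "cmod (1 - complex_of_real (s j) * x $ j) = 1 - s j"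
      unfolding detnew norm_mult using mult_eq_mult_lower_bounds[OF Apos IH1 B(2,1)] by auto
    show "C *\<^sub>v unit_vec n k = unit_vec n k"
    proof (cases "k < j")
      case True thus ?thesis using IH2 eq(1) sk by simp
    next
      case False
      hence "k = j" using k by simp
      thus ?thesis using sk cmod_one_minus_of_real_mult_eq_imp[OF _ xj1 eq(2)]
          unitary_resolvent_col_bound(2)[OF C j d dj x Mx] by simp
    qed
  qed
qed

lemma cmod_det_one_minus_mult_diag_ge: assumes C: "unitary_mat n C" and s: "\<forall>k<n. 0 \<le> s k \<and> s k < 1"
  shows "cmod (det (1\<^sub>m n - C * real_diag_mat n s)) \<ge> (\<Prod>k<n. 1 - s k) \<and>
    (cmod (det (1\<^sub>m n - C * real_diag_mat n s)) = (\<Prod>k<n. 1 - s k)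
      \<longrightarrow> C * real_diag_mat n s = real_diag_mat n s)"
proof -
  have Cc: "C \<in> carrier_mat n n" using C unitary_mat_carrier by auto
  have e: "mat_diag n (\<lambda>k. complex_of_real (if k < n then s k else 0)) = real_diag_mat n s"
    by (intro eq_matI, auto)
  have L: "cmod (det (1\<^sub>m n - C * real_diag_mat n s)) \<ge> (\<Prod>k<n. 1 - s k) \<and>
    (cmod (det (1\<^sub>m n - C * real_diag_mat n s)) = (\<Prod>k<n. 1 - s k)
      \<longrightarrow> (\<forall>k<n. s k > 0 \<longrightarrow> C *\<^sub>v unit_vec n k = unit_vec n k))"
    using cmod_det_one_minus_mult_diag_ge_aux[OF C s order.refl] unfolding e by simp
  show ?thesis
  proof (intro conjI impI)
    show "cmod (det (1\<^sub>m n - C * real_diag_mat n s)) \<ge> (\<Prod>k<n. 1 - s k)" using L by simp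
    assume "cmod (det (1\<^sub>m n - C * real_diag_mat n s)) = (\<Prod>k<n. 1 - s k)"
    hence ce: "\<forall>k<n. s k > 0 \<longrightarrow> C *\<^sub>v unit_vec n k = unit_vec n k" using L by simp
    show "C * real_diag_mat n s = real_diag_mat n s"
    proof (rule eq_matI)
      fix a b assume "a < dim_row (real_diag_mat n s)" "b < dim_col (real_diag_mat n s)"
      hence a: "a < n" and b: "b < n" by auto
      have "(C * real_diag_mat n s) $$ (a,b) = C $$ (a,b) * complex_of_real (s b)"
        by (rule mult_mat_diag_index[OF Cc a b])
      also have "\<dots> = real_diag_mat n s $$ (a,b)"
      proof (cases "s b > 0")
        case True
        have "C $$ (a,b) = (C *\<^sub>v unit_vec n b) $ a" using mult_mat_vec_unit_vec_index[OF Cc a b] by simp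
        also have "\<dots> = unit_vec n b $ a" using ce True b by simp
        finally show ?thesis using a b by (simp add: unit_vec_def)
      next
        case False
        hence "s b = 0" using s b by force
        thus ?thesis using a b by simp
      qed
      finally show "(C * real_diag_mat n s) $$ (a,b) = real_diag_mat n s $$ (a,b)" .
    qed (use Cc in auto)
  qed
qed

lemma cmod_det_one_minus_mult_spectral_ge: assumes U: "unitary_mat n U" and V: "unitary_mat n V"
  and W: "W = V * real_diag_mat n s * adj_mat V"
  and s: "\<forall>k<n. 0 \<le> s k \<and> s k < 1"
  shows "cmod (det (1\<^sub>m n - U * W)) \<ge> (\<Prod>k<n. 1 - s k) \<and>
    (cmod (det (1\<^sub>m n - U * W)) = (\<Prod>k<n. 1 - s k) \<longrightarrow> U * W = W)"
proof -
  have Uc: "U \<in> carrier_mat n n" using U unitary_mat_carrier by auto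
  have Vc: "V \<in> carrier_mat n n" using V unitary_mat_carrier by auto
  have aVc: "adj_mat V \<in> carrier_mat n n" using Vc by simp
  let ?D = "real_diag_mat n s"
  define C where "C = adj_mat V * U * V"
  have C: "unitary_mat n C" unfolding C_def by (intro unitary_mat_mult unitary_mat_adj U V)
  have Cc: "C \<in> carrier_mat n n" using C unitary_mat_carrier by auto
  have CD: "C * ?D \<in> carrier_mat n n" using Cc by simp
  have Zc: "U * V * ?D \<in> carrier_mat n n" using Uc Vc by (intro mult_mult_carrier_mat, auto)
  have "C * ?D = adj_mat V * (U * V * ?D)" unfolding C_def using Uc Vc aVc
    by (simp add: assoc_mult_mat[of _ n n _ n _ n])
  hence "V * (C * ?D) = U * V * ?D" using unitary_mat_mult_adj_cancel[OF V Zc] by simp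
  hence VCDV: "V * (C * ?D) * adj_mat V = U * W" unfolding W using Uc Vc aVc
    by (simp add: assoc_mult_mat[of _ n n _ n _ n])
  have eq1: "1\<^sub>m n - U * W = V * (1\<^sub>m n - C * ?D) * adj_mat V"
  proof -
    have "V * (1\<^sub>m n - C * ?D) = V * 1\<^sub>m n - V * (C * ?D)" using Vc CD by (intro mult_minus_distrib_mat, auto)
    hence "V * (1\<^sub>m n - C * ?D) * adj_mat V = (V - V * (C * ?D)) * adj_mat V" using Vc by simp
    also have "\<dots> = V * adj_mat V - V * (C * ?D) * adj_mat V" using Vc CD aVc
      by (intro minus_mult_distrib_mat[of _ n n], auto)
    finally show ?thesis unfolding VCDV using unitary_mat_mult_adj[OF V] by simp
  qed
  have dd: "det (1\<^sub>m n - U * W) = det (1\<^sub>m n - C * ?D)" unfolding eq1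
    using minus_carrier_mat[OF CD] by (intro det_unitary_conj[OF V])
  from cmod_det_one_minus_mult_diag_ge[OF C s]
  have L: "cmod (det (1\<^sub>m n - C * ?D)) \<ge> (\<Prod>k<n. 1 - s k)"
    and L2: "cmod (det (1\<^sub>m n - C * ?D)) = (\<Prod>k<n. 1 - s k) \<longrightarrow> C * ?D = ?D" by auto
  show ?thesis
  proof (intro conjI impI)
    show "cmod (det (1\<^sub>m n - U * W)) \<ge> (\<Prod>k<n. 1 - s k)" using L dd by simp
    assume "cmod (det (1\<^sub>m n - U * W)) = (\<Prod>k<n. 1 - s k)"
    hence "C * ?D = ?D" using L2 dd by simp
    hence "V * (C * ?D) * adj_mat V = W" unfolding W by simp
    thus "U * W = W" unfolding VCDV .
  qed
qed

section \<open>Weighted sums of matrices\<close>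

lemma wsum_mat_carrier[simp]: "wsum_mat n m w A \<in> carrier_mat n n"
  by (simp add: wsum_mat_def)

lemma wsum_mat_dim[simp]: "dim_row (wsum_mat n m w A) = n" "dim_col (wsum_mat n m w A) = n"
  by (auto simp: wsum_mat_def)

lemma wsum_mat_index: "a < n \<Longrightarrow> b < n \<Longrightarrow> wsum_mat n m w A $$ (a,b) = (\<Sum>i<m. complex_of_real (w i) * A i $$ (a,b))"
  by (simp add: wsum_mat_def)

lemma wsum_mat_hermitian: assumes "\<forall>i<m. A i \<in> carrier_mat n n \<and> adj_mat (A i) = A i"
  shows "adj_mat (wsum_mat n m w A) = wsum_mat n m w A"
proof (rule eq_matI)
  fix a b assume "a < dim_row (wsum_mat n m w A)" "b < dim_col (wsum_mat n m w A)"
  hence a: "a < n" and b: "b < n" by (auto simp: wsum_mat_def)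
  have "adj_mat (wsum_mat n m w A) $$ (a,b) = cnj (\<Sum>i<m. complex_of_real (w i) * A i $$ (b,a))"
    using a b by (simp add: wsum_mat_def)
  also have "\<dots> = (\<Sum>i<m. complex_of_real (w i) * cnj (A i $$ (b,a)))" by simp
  also have "\<dots> = (\<Sum>i<m. complex_of_real (w i) * A i $$ (a,b))"
  proof (intro sum.cong refl)
    fix i assume "i \<in> {..<m}"
    hence Ai: "A i \<in> carrier_mat n n" and h: "adj_mat (A i) = A i" using assms by auto
    have "cnj (A i $$ (b,a)) = adj_mat (A i) $$ (a,b)" using Ai a b by simp
    thus "complex_of_real (w i) * cnj (A i $$ (b,a)) = complex_of_real (w i) * A i $$ (a,b)"
      unfolding h by simp
  qed
  finally show "adj_mat (wsum_mat n m w A) $$ (a,b) = wsum_mat n m w A $$ (a,b)" using a b by (simp add: wsum_mat_index)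
qed (auto simp: wsum_mat_def)

lemma wsum_mat_mult_vec_index: assumes A: "\<forall>i<m. A i \<in> carrier_mat n n" and v: "v \<in> carrier_vec n" and a: "a < n"
  shows "(wsum_mat n m w A *\<^sub>v v) $ a = (\<Sum>i<m. complex_of_real (w i) * (A i *\<^sub>v v) $ a)"
proof -
  have "(wsum_mat n m w A *\<^sub>v v) $ a = (\<Sum>k<n. wsum_mat n m w A $$ (a,k) * v $ k)"
    using v a by (intro mult_mat_vec_index_sum, auto)
  also have "\<dots> = (\<Sum>k<n. \<Sum>i<m. complex_of_real (w i) * A i $$ (a,k) * v $ k)"
    using a by (intro sum.cong refl, simp add: wsum_mat_index sum_distrib_right)
  also have "\<dots> = (\<Sum>i<m. \<Sum>k<n. complex_of_real (w i) * A i $$ (a,k) * v $ k)" by (rule sum.swap)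
  also have "\<dots> = (\<Sum>i<m. complex_of_real (w i) * (A i *\<^sub>v v) $ a)"
  proof (intro sum.cong refl)
    fix i assume "i \<in> {..<m}"
    hence Ai: "A i \<in> carrier_mat n n" using A by simp
    show "(\<Sum>k<n. complex_of_real (w i) * A i $$ (a,k) * v $ k) = complex_of_real (w i) * (A i *\<^sub>v v) $ a"
      using mult_mat_vec_index_sum[OF Ai v a] by (simp add: sum_distrib_left mult.assoc)
  qed
  finally show ?thesis .
qed

lemma cinner_wsum_mat: assumes A: "\<forall>i<m. A i \<in> carrier_mat n n" and v: "v \<in> carrier_vec n"
  shows "cinner v (wsum_mat n m w A *\<^sub>v v) = (\<Sum>i<m. complex_of_real (w i) * cinner v (A i *\<^sub>v v))"
proof -
  have "cinner v (wsum_mat n m w A *\<^sub>v v) = (\<Sum>a<n. cnj (v $ a) * (wsum_mat n m w A *\<^sub>v v) $ a)"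
    using v mult_mat_vec_carrier[of "wsum_mat n m w A" n n v] by (intro cinner_eq_sum, auto)
  also have "\<dots> = (\<Sum>a<n. \<Sum>i<m. complex_of_real (w i) * (cnj (v $ a) * (A i *\<^sub>v v) $ a))"
  proof (intro sum.cong refl)
    fix a assume "a \<in> {..<n}" hence a: "a < n" by simp
    show "cnj (v $ a) * (wsum_mat n m w A *\<^sub>v v) $ a = (\<Sum>i<m. complex_of_real (w i) * (cnj (v $ a) * (A i *\<^sub>v v) $ a))"
      unfolding wsum_mat_mult_vec_index[OF A v a] by (simp add: sum_distrib_left algebra_simps)
  qed
  also have "\<dots> = (\<Sum>i<m. \<Sum>a<n. complex_of_real (w i) * (cnj (v $ a) * (A i *\<^sub>v v) $ a))" by (rule sum.swap)
  also have "\<dots> = (\<Sum>i<m. complex_of_real (w i) * cinner v (A i *\<^sub>v v))"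
  proof (intro sum.cong refl)
    fix i assume "i \<in> {..<m}"
    hence Ai: "A i \<in> carrier_mat n n" using A by simp
    have "cinner v (A i *\<^sub>v v) = (\<Sum>a<n. cnj (v $ a) * (A i *\<^sub>v v) $ a)"
      using v Ai mult_mat_vec_carrier[OF Ai v] by (intro cinner_eq_sum, auto)
    thus "(\<Sum>a<n. complex_of_real (w i) * (cnj (v $ a) * (A i *\<^sub>v v) $ a)) = complex_of_real (w i) * cinner v (A i *\<^sub>v v)"
      by (simp add: sum_distrib_left)
  qed
  finally show ?thesis .
qed

lemma wsum_mat_const: assumes "\<forall>i<m. A i = B" "(\<Sum>i<m. w i) = 1" "B \<in> carrier_mat n n"
  shows "wsum_mat n m w A = B"
proof (rule eq_matI)
  fix a b assume "a < dim_row B" "b < dim_col B"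
  hence a: "a < n" and b: "b < n" using assms by auto
  have "wsum_mat n m w A $$ (a,b) = (\<Sum>i<m. complex_of_real (w i) * B $$ (a,b))"
    using a b assms by (simp add: wsum_mat_index)
  also have "\<dots> = complex_of_real (\<Sum>i<m. w i) * B $$ (a,b)" by (simp add: sum_distrib_right)
  finally show "wsum_mat n m w A $$ (a,b) = B $$ (a,b)" using assms by simp
qed (use assms in \<open>auto simp: wsum_mat_def\<close>)

lemma ex_const_iff_wsum_mat:
  assumes m: "m > 0" and w_sum: "(\<Sum>i<m. w i) = 1" and A: "\<forall>i<m. A i \<in> carrier_mat n n"
  shows "(\<exists>B. (\<forall>i<m. A i = B) \<and> Q B) \<longleftrightarrow> (\<forall>i<m. A i = wsum_mat n m w A) \<and> Q (wsum_mat n m w A)"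
proof
  assume "\<exists>B. (\<forall>i<m. A i = B) \<and> Q B"
  then obtain B where AB: "\<forall>i<m. A i = B" and "Q B" by blast
  moreover have "wsum_mat n m w A = B" using wsum_mat_const[OF AB w_sum] AB A m by auto
  ultimately show "(\<forall>i<m. A i = wsum_mat n m w A) \<and> Q (wsum_mat n m w A)" by simp
qed blast

lemma weighted_variance_identity: fixes z :: "nat \<Rightarrow> complex" and w :: "nat \<Rightarrow> real"
  assumes ws: "(\<Sum>i<m. w i) = 1"
  defines "b \<equiv> (\<Sum>i<m. complex_of_real (w i) * z i)"
  shows "(\<Sum>i<m. w i * (cmod (z i - b))^2) = (\<Sum>i<m. w i * (cmod (z i))^2) - (cmod b)^2"
proof -
  have cs: "(\<Sum>i<m. complex_of_real (w i)) = 1" using ws by (metis of_real_1 of_real_sum)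
  have "complex_of_real (\<Sum>i<m. w i * (cmod (z i - b))^2)
     = (\<Sum>i<m. complex_of_real (w i) * (cnj (z i - b) * (z i - b)))"
    by (simp only: of_real_sum of_real_mult cnj_mult_self_eq_cmod_sq)
  also have "\<dots> = (\<Sum>i<m. complex_of_real (w i) * (cnj (z i) * z i))
       - cnj b * (\<Sum>i<m. complex_of_real (w i) * z i)
       - b * (\<Sum>i<m. complex_of_real (w i) * cnj (z i))
       + (\<Sum>i<m. complex_of_real (w i)) * (cnj b * b)"
    by (simp add: sum_subtractf sum.distrib sum_distrib_left sum_distrib_right algebra_simps)
  also have "(\<Sum>i<m. complex_of_real (w i) * cnj (z i)) = cnj b" unfolding b_def by simp
  also have "(\<Sum>i<m. complex_of_real (w i) * z i) = b" unfolding b_def ..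
  also have "(\<Sum>i<m. complex_of_real (w i) * (cnj (z i) * z i)) = complex_of_real (\<Sum>i<m. w i * (cmod (z i))^2)"
    by (simp only: of_real_sum of_real_mult cnj_mult_self_eq_cmod_sq)
  finally have "complex_of_real (\<Sum>i<m. w i * (cmod (z i - b))^2)
     = complex_of_real (\<Sum>i<m. w i * (cmod (z i))^2) - cnj b * b" unfolding cs by (simp add: algebra_simps)
  also have "cnj b * b = complex_of_real ((cmod b)^2)" by (rule cnj_mult_self_eq_cmod_sq)
  finally show ?thesis by (simp only: of_real_diff[symmetric] of_real_eq_iff)
qed

lemma cinner_wsum_square_minus_square: assumes P: "\<forall>i<m. P i \<in> carrier_mat n n \<and> adj_mat (P i) = P i"
  and ws: "(\<Sum>i<m. w i) = 1" and v: "v \<in> carrier_vec n"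
  defines "W \<equiv> wsum_mat n m w P" and "S \<equiv> wsum_mat n m w (\<lambda>i. P i * P i)"
  shows "cinner v ((S - W * W) *\<^sub>v v) = complex_of_real (\<Sum>a<n. \<Sum>i<m. w i * (cmod ((P i *\<^sub>v v) $ a - (W *\<^sub>v v) $ a))^2)"
proof -
  have Wc: "W \<in> carrier_mat n n" unfolding W_def by simp
  have Sc: "S \<in> carrier_mat n n" unfolding S_def by simp
  have hW: "adj_mat W = W" unfolding W_def using P by (intro wsum_mat_hermitian, auto)
  have Pc: "\<forall>i<m. P i \<in> carrier_mat n n" using P by auto
  have PPc: "\<forall>i<m. P i * P i \<in> carrier_mat n n" using P by auto
  have Sv: "S *\<^sub>v v \<in> carrier_vec n" using Sc v mult_mat_vec_carrier[of S n n] by simp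
  have WWv: "(W * W) *\<^sub>v v \<in> carrier_vec n" using Wc v mult_mat_vec_carrier[of "W * W" n n] by simp
  have "(S - W * W) *\<^sub>v v = S *\<^sub>v v - (W * W) *\<^sub>v v" using Sc Wc v by (intro minus_mult_distrib_mat_vec, auto)
  hence "cinner v ((S - W * W) *\<^sub>v v) = cinner v (S *\<^sub>v v) - cinner v ((W * W) *\<^sub>v v)"
    using cinner_minus_right[OF v Sv WWv] by simp
  also have "cinner v (S *\<^sub>v v) = (\<Sum>i<m. complex_of_real (w i) * cinner v ((P i * P i) *\<^sub>v v))"
    unfolding S_def by (rule cinner_wsum_mat[OF PPc v])
  also have "\<dots> = (\<Sum>i<m. complex_of_real (w i) * complex_of_real (\<Sum>a<n. (cmod ((P i *\<^sub>v v) $ a))^2))"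
  proof (intro sum.cong refl)
    fix i assume "i \<in> {..<m}"
    hence "P i \<in> carrier_mat n n" "adj_mat (P i) = P i" using P by auto
    thus "complex_of_real (w i) * cinner v ((P i * P i) *\<^sub>v v) = complex_of_real (w i) * complex_of_real (\<Sum>a<n. (cmod ((P i *\<^sub>v v) $ a))^2)"
      using cinner_hermitian_square[of "P i" n v] v by simp
  qed
  also have "\<dots> = complex_of_real (\<Sum>i<m. w i * (\<Sum>a<n. (cmod ((P i *\<^sub>v v) $ a))^2))"
    by (simp only: of_real_sum of_real_mult)
  also have "cinner v ((W * W) *\<^sub>v v) = complex_of_real (\<Sum>a<n. (cmod ((W *\<^sub>v v) $ a))^2)"
    by (rule cinner_hermitian_square[OF Wc hW v])
  finally have e1: "cinner v ((S - W * W) *\<^sub>v v) = complex_of_real ((\<Sum>i<m. w i * (\<Sum>a<n. (cmod ((P i *\<^sub>v v) $ a))^2))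
     - (\<Sum>a<n. (cmod ((W *\<^sub>v v) $ a))^2))" by simp
  have Wva: "(W *\<^sub>v v) $ a = (\<Sum>i<m. complex_of_real (w i) * (P i *\<^sub>v v) $ a)" if a: "a < n" for a
    unfolding W_def by (rule wsum_mat_mult_vec_index[OF Pc v a])
  have "(\<Sum>a<n. \<Sum>i<m. w i * (cmod ((P i *\<^sub>v v) $ a - (W *\<^sub>v v) $ a))^2)
     = (\<Sum>a<n. (\<Sum>i<m. w i * (cmod ((P i *\<^sub>v v) $ a))^2) - (cmod ((W *\<^sub>v v) $ a))^2)"
  proof (intro sum.cong refl)
    fix a assume "a \<in> {..<n}" hence a: "a < n" by simp
    show "(\<Sum>i<m. w i * (cmod ((P i *\<^sub>v v) $ a - (W *\<^sub>v v) $ a))^2)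
       = (\<Sum>i<m. w i * (cmod ((P i *\<^sub>v v) $ a))^2) - (cmod ((W *\<^sub>v v) $ a))^2"
      unfolding Wva[OF a] by (rule weighted_variance_identity[OF ws])
  qed
  also have "\<dots> = (\<Sum>i<m. w i * (\<Sum>a<n. (cmod ((P i *\<^sub>v v) $ a))^2)) - (\<Sum>a<n. (cmod ((W *\<^sub>v v) $ a))^2)"
    by (simp add: sum_subtractf sum_distrib_left sum.swap[of _ "{..<n}" "{..<m}"])
  finally show ?thesis using e1 by simp
qed

lemma psd_wsum_square_minus_square: assumes P: "\<forall>i<m. P i \<in> carrier_mat n n \<and> adj_mat (P i) = P i"
  and ws: "(\<Sum>i<m. w i) = 1" and wnn: "\<forall>i<m. w i \<ge> 0"
  shows "psd_mat n (wsum_mat n m w (\<lambda>i. P i * P i) - wsum_mat n m w P * wsum_mat n m w P)"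
proof -
  let ?W = "wsum_mat n m w P" and ?S = "wsum_mat n m w (\<lambda>i. P i * P i)"
  have Wc: "?W \<in> carrier_mat n n" by simp
  have hW: "adj_mat ?W = ?W" using P by (intro wsum_mat_hermitian, auto)
  have hS: "adj_mat ?S = ?S"
  proof (intro wsum_mat_hermitian allI impI conjI)
    fix i assume "i < m"
    hence Pi: "P i \<in> carrier_mat n n" and h: "adj_mat (P i) = P i" using P by auto
    show "P i * P i \<in> carrier_mat n n" using Pi by simp
    show "adj_mat (P i * P i) = P i * P i" using Pi h by (simp add: adj_mat_mult[of _ n n _ n])
  qed
  have hWW: "adj_mat (?W * ?W) = ?W * ?W" using Wc hW by (simp add: adj_mat_mult[of _ n n _ n])
  have c: "?S - ?W * ?W \<in> carrier_mat n n" using mult_carrier_mat[OF Wc Wc] by (rule minus_carrier_mat)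
  have h: "adj_mat (?S - ?W * ?W) = ?S - ?W * ?W"
    using adj_mat_minus[OF wsum_mat_carrier mult_carrier_mat[OF Wc Wc]] hS hWW by simp
  have "Re (cinner v ((?S - ?W * ?W) *\<^sub>v v)) \<ge> 0" if v: "v \<in> carrier_vec n" for v
    using cinner_wsum_square_minus_square[OF P ws v] wnn by (auto intro!: sum_nonneg mult_nonneg_nonneg)
  thus ?thesis unfolding psd_mat_def cinner_def[symmetric] using c h by auto
qed

lemma wsum_square_eq_square_imp_eq: assumes P: "\<forall>i<m. P i \<in> carrier_mat n n \<and> adj_mat (P i) = P i"
  and ws: "(\<Sum>i<m. w i) = 1" and wpos: "\<forall>i<m. w i > 0"
  and eq: "wsum_mat n m w (\<lambda>i. P i * P i) = wsum_mat n m w P * wsum_mat n m w P"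
  shows "\<forall>i<m. P i = wsum_mat n m w P"
proof (intro allI impI)
  fix i assume i: "i < m"
  let ?W = "wsum_mat n m w P" and ?S = "wsum_mat n m w (\<lambda>i. P i * P i)"
  have Wc: "?W \<in> carrier_mat n n" by simp
  have Pi: "P i \<in> carrier_mat n n" using P i by auto
  have z: "(?S - ?W * ?W) = 0\<^sub>m n n" unfolding eq using mult_carrier_mat[OF Wc Wc] by (rule minus_r_inv_mat)
  show "P i = ?W"
  proof (rule eq_matI)
    fix a b assume "a < dim_row ?W" "b < dim_col ?W"
    hence a: "a < n" and b: "b < n" by (auto simp: wsum_mat_def)
    let ?v = "unit_vec n b"
    have v: "?v \<in> carrier_vec n" by simp
    have "cinner ?v ((?S - ?W * ?W) *\<^sub>v ?v) = 0" unfolding z zero_mat_vec[OF v] by (rule cinner_zero_right[OF v])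
    hence "complex_of_real (\<Sum>a<n. \<Sum>i<m. w i * (cmod ((P i *\<^sub>v ?v) $ a - (?W *\<^sub>v ?v) $ a))^2) = 0"
      by (metis cinner_wsum_square_minus_square[OF P ws v])
    hence "(\<Sum>a<n. \<Sum>i<m. w i * (cmod ((P i *\<^sub>v ?v) $ a - (?W *\<^sub>v ?v) $ a))^2) = 0"
      by (simp only: of_real_eq_0_iff)
    hence "(\<Sum>i<m. w i * (cmod ((P i *\<^sub>v ?v) $ a - (?W *\<^sub>v ?v) $ a))^2) = 0"
      using sum_nonneg_eq_0_iff[of "{..<n}" "\<lambda>a. \<Sum>i<m. w i * (cmod ((P i *\<^sub>v ?v) $ a - (?W *\<^sub>v ?v) $ a))^2"] a wpos
      by (force intro!: sum_nonneg)
    hence "w i * (cmod ((P i *\<^sub>v ?v) $ a - (?W *\<^sub>v ?v) $ a))^2 = 0"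
      using sum_nonneg_eq_0_iff[of "{..<m}" "\<lambda>i. w i * (cmod ((P i *\<^sub>v ?v) $ a - (?W *\<^sub>v ?v) $ a))^2"] i wpos
      by (force intro!: sum_nonneg)
    moreover have "w i \<noteq> 0" using wpos i by force
    ultimately have "(P i *\<^sub>v ?v) $ a = (?W *\<^sub>v ?v) $ a" by simp
    thus "P i $$ (a,b) = ?W $$ (a,b)" using mult_mat_vec_unit_vec_index[OF Pi a b] mult_mat_vec_unit_vec_index[OF Wc a b] by simp
  qed (use Pi in auto)
qed

lemma cinner_spectral_square_lt:
  assumes V: "unitary_mat n V" and P: "P = V * real_diag_mat n d * adj_mat V"
    and d: "\<forall>k<n. 0 \<le> d k \<and> d k < 1" and v: "v \<in> carrier_vec n" and v0: "v \<noteq> 0\<^sub>v n"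
  shows "Re (cinner v ((P * P) *\<^sub>v v)) < (\<Sum>a<n. (cmod (v $ a))^2)"
proof -
  have PP: "P * P = V * real_diag_mat n (\<lambda>k. d k * d k) * adj_mat V"
    unfolding P unitary_conj_square[OF V mat_diag_dim] mat_diag_diag by (simp add: of_real_mult)
  have "\<forall>k<n. 0 \<le> d k * d k \<and> d k * d k < 1"
  proof (intro allI impI conjI)
    fix k assume k: "k < n"
    show "0 \<le> d k * d k" using d k by simp
    have "d k * d k \<le> d k * 1" "d k < 1" using d k by (intro mult_left_mono, auto)
    thus "d k * d k < 1" by simp
  qed
  thus ?thesis using cinner_spectral_contraction[OF V PP _ v] v0 by auto
qed

lemma pd_one_minus_wsum_square:
  assumes m: "m > 0" and w_pos: "\<forall>i<m. w i > 0" and w_sum: "(\<Sum>i<m. w i) = 1"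
    and V: "\<forall>i<m. unitary_mat n (V i)" and P: "\<forall>i<m. P i = V i * real_diag_mat n (d i) * adj_mat (V i)"
    and d: "\<forall>i<m. \<forall>k<n. 0 \<le> d i k \<and> d i k < 1"
  shows "pd_mat n (1\<^sub>m n - wsum_mat n m w (\<lambda>i. P i * P i))"
proof -
  let ?S = "wsum_mat n m w (\<lambda>i. P i * P i)"
  have Pc: "\<forall>i<m. P i \<in> carrier_mat n n" using P V unitary_mat_carrier by (auto intro!: mult_mult_carrier_mat)
  have hP: "\<forall>i<m. adj_mat (P i) = P i" using P V hermitian_of_spectral by blast
  have PPc: "\<forall>i<m. P i * P i \<in> carrier_mat n n" using Pc by auto
  have Sc: "?S \<in> carrier_mat n n" by simp
  have hS: "adj_mat ?S = ?S"
    using Pc hP by (intro wsum_mat_hermitian allI impI conjI, auto simp: adj_mat_mult[of _ n n _ n])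
  have form: "Re (cinner v ((1\<^sub>m n - ?S) *\<^sub>v v)) > 0" if v: "v \<in> carrier_vec n" and v0: "v \<noteq> 0\<^sub>v n" for v
  proof -
    let ?N = "\<Sum>a<n. (cmod (v $ a))^2"
    have Sv: "?S *\<^sub>v v \<in> carrier_vec n" using Sc v mult_mat_vec_carrier[of ?S n n] by simp
    have "(1\<^sub>m n - ?S) *\<^sub>v v = 1\<^sub>m n *\<^sub>v v - ?S *\<^sub>v v" using Sc v by (intro minus_mult_distrib_mat_vec, auto)
    hence "cinner v ((1\<^sub>m n - ?S) *\<^sub>v v) = cinner v v - cinner v (?S *\<^sub>v v)" using cinner_minus_right[OF v v Sv] v by simp
    also have "cinner v (?S *\<^sub>v v) = (\<Sum>i<m. complex_of_real (w i) * cinner v ((P i * P i) *\<^sub>v v))" by (rule cinner_wsum_mat[OF PPc v])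
    finally have e: "Re (cinner v ((1\<^sub>m n - ?S) *\<^sub>v v)) = ?N - (\<Sum>i<m. w i * Re (cinner v ((P i * P i) *\<^sub>v v)))"
      using cinner_self[OF v] by (simp add: Re_sum)
    have "(\<Sum>i<m. w i * Re (cinner v ((P i * P i) *\<^sub>v v))) < (\<Sum>i<m. w i * ?N)"
      using m w_pos cinner_spectral_square_lt[OF _ _ _ v v0] V P d by (intro sum_strict_mono, auto)
    also have "\<dots> = ?N" using w_sum by (simp add: sum_distrib_right[symmetric])
    finally show ?thesis using e by simp
  qed
  have c: "1\<^sub>m n - ?S \<in> carrier_mat n n" using Sc by (rule minus_carrier_mat)
  have h: "adj_mat (1\<^sub>m n - ?S) = 1\<^sub>m n - ?S" using hS Sc by (simp add: adj_mat_minus[of _ n n])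
  show ?thesis unfolding pd_mat_def using c h form by auto
qed

lemma unitary_transition_row_sum: assumes Vi: "unitary_mat n Vi" and V: "unitary_mat n V" and k: "k < n"
  shows "(\<Sum>j<n. (cmod ((adj_mat Vi *\<^sub>v (V *\<^sub>v unit_vec n k)) $ j))^2) = 1"
proof -
  have Vc: "V \<in> carrier_mat n n" using V unitary_mat_carrier by auto
  have Vic: "Vi \<in> carrier_mat n n" using Vi unitary_mat_carrier by auto
  let ?x = "V *\<^sub>v unit_vec n k"
  have x: "?x \<in> carrier_vec n" using Vc mult_mat_vec_carrier[of V n n] by simp
  have y: "adj_mat Vi *\<^sub>v ?x \<in> carrier_vec n" using Vic x mult_mat_vec_carrier[of "adj_mat Vi" n n] by simp
  have "cinner (adj_mat Vi *\<^sub>v ?x) (adj_mat Vi *\<^sub>v ?x) = cinner ?x ?x" by (rule cinner_unitary[OF unitary_mat_adj[OF Vi] x x])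
  also have "\<dots> = 1" using cinner_unitary[OF V, of "unit_vec n k" "unit_vec n k"] cinner_unit_vec[OF k] by simp
  finally have "complex_of_real (\<Sum>j<n. (cmod ((adj_mat Vi *\<^sub>v ?x) $ j))^2) = 1" using cinner_self[OF y] by simp
  thus ?thesis by (simp only: of_real_eq_1_iff)
qed

lemma unitary_transition_col_sum: assumes Vi: "unitary_mat n Vi" and V: "unitary_mat n V" and j: "j < n"
  shows "(\<Sum>k<n. (cmod ((adj_mat Vi *\<^sub>v (V *\<^sub>v unit_vec n k)) $ j))^2) = 1"
proof -
  have Vc: "V \<in> carrier_mat n n" using V unitary_mat_carrier by auto
  have Vic: "Vi \<in> carrier_mat n n" using Vi unitary_mat_carrier by auto
  define X where "X = adj_mat Vi * V"
  have X: "unitary_mat n X" unfolding X_def by (intro unitary_mat_mult unitary_mat_adj Vi V)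
  have Xc: "X \<in> carrier_mat n n" using X unitary_mat_carrier by auto
  have e: "(adj_mat Vi *\<^sub>v (V *\<^sub>v unit_vec n k)) $ j = X $$ (j,k)" if k: "k < n" for k
  proof -
    have "adj_mat Vi *\<^sub>v (V *\<^sub>v unit_vec n k) = X *\<^sub>v unit_vec n k" unfolding X_def using Vic Vc
      by (intro assoc_mult_mat_vec[symmetric, of _ n n _ n], auto)
    thus ?thesis using mult_mat_vec_unit_vec_index[OF Xc j k] by simp
  qed
  have "complex_of_real (\<Sum>k<n. (cmod ((adj_mat Vi *\<^sub>v (V *\<^sub>v unit_vec n k)) $ j))^2)
      = (\<Sum>k<n. X $$ (j,k) * cnj (X $$ (j,k)))"
    using e cnj_mult_self_eq_cmod_sq by (simp add: mult.commute)
  also have "\<dots> = 1" using unitary_mat_rows_orthonormal[OF X j j] by simp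
  finally show ?thesis by (simp only: of_real_eq_1_iff)
qed

section \<open>Convexity of log ((1 + t) / (1 - t))\<close>

definition log_ratio :: "real \<Rightarrow> real" where "log_ratio t = ln (1 + t) - ln (1 - t)"

lemma convex_on_log_ratio: "convex_on {0..<1} log_ratio"
proof (rule convex_on_realI[where f' = "\<lambda>t. 1 / (1 + t) + 1 / (1 - t)"])
  show "connected {0..<(1::real)}" by (simp add: connected_Ico)
  fix x :: real assume x: "x \<in> {0..<1}"
  show "(log_ratio has_real_derivative 1 / (1 + x) + 1 / (1 - x)) (at x)"
    unfolding log_ratio_def using x by (auto intro!: derivative_eq_intros)
next
  fix x y :: real assume x: "x \<in> {0..<1}" and y: "y \<in> {0..<1}" and xy: "x \<le> y"
  have "1 / (1 + x) + 1 / (1 - x) = 2 / (1 - x^2)" using x by (simp add: field_simps power2_eq_square)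
  also have "\<dots> \<le> 2 / (1 - y^2)"
  proof -
    have "x^2 \<le> y^2" using x xy by (intro power_mono, auto)
    moreover have "y^2 < 1" using y by (simp add: power_less_one_iff abs_less_iff)
    ultimately show ?thesis by (intro divide_left_mono, auto)
  qed
  also have "\<dots> = 1 / (1 + y) + 1 / (1 - y)" using y by (simp add: field_simps power2_eq_square)
  finally show "1 / (1 + x) + 1 / (1 - x) \<le> 1 / (1 + y) + 1 / (1 - y)" .
qed

lemma log_ratio_jensen: assumes "finite S" "S \<noteq> {}" "(\<Sum>i\<in>S. a i) = 1" "\<And>i. i \<in> S \<Longrightarrow> a i \<ge> 0"
  "\<And>i. i \<in> S \<Longrightarrow> 0 \<le> y i \<and> y i < 1"
  shows "log_ratio (\<Sum>i\<in>S. a i * y i) \<le> (\<Sum>i\<in>S. a i * log_ratio (y i))"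
  using convex_on_sum[OF assms(1,2) convex_on_log_ratio assms(3), of y] assms(4,5) by auto

lemma convex_comb_in_unit_interval: fixes B y :: "nat \<Rightarrow> real"
  assumes "n > 0" "(\<Sum>j<n. B j) = 1" "\<forall>j<n. B j \<ge> 0" "\<forall>j<n. 0 \<le> y j \<and> y j < 1"
  shows "0 \<le> (\<Sum>j<n. B j * y j) \<and> (\<Sum>j<n. B j * y j) < 1"
proof
  show "0 \<le> (\<Sum>j<n. B j * y j)" using assms by (intro sum_nonneg, auto)
  obtain j where j: "j < n" "B j > 0"
  proof (rule ccontr)
    assume "\<not> thesis"
    hence "\<forall>j<n. B j \<le> 0" using that by force
    hence "(\<Sum>j<n. B j) \<le> 0" by (intro sum_nonpos, auto)
    thus False using assms(2) by simp
  qed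
  have "(\<Sum>k<n. B k * (1 - y k)) > 0"
  proof -
    have "(\<Sum>k<n. B k * (1 - y k)) \<ge> B j * (1 - y j)"
      using j assms by (intro member_le_sum, auto)
    moreover have "B j * (1 - y j) > 0" using j assms by simp
    ultimately show ?thesis by simp
  qed
  thus "(\<Sum>j<n. B j * y j) < 1" using assms(2) by (simp add: algebra_simps sum_subtractf sum_distrib_left)
qed

lemma sum_log_ratio_doubly_stochastic_le: fixes w :: "nat \<Rightarrow> real" and d :: "nat \<Rightarrow> nat \<Rightarrow> real" and B :: "nat \<Rightarrow> nat \<Rightarrow> nat \<Rightarrow> real"
  assumes m: "m > 0" and wpos: "\<forall>i<m. w i > 0" and wsum: "(\<Sum>i<m. w i) = 1"
  and d: "\<forall>i<m. \<forall>j<n. 0 \<le> d i j \<and> d i j < 1"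
  and Bnn: "\<forall>i<m. \<forall>k<n. \<forall>j<n. B i k j \<ge> 0"
  and Brow: "\<forall>i<m. \<forall>k<n. (\<Sum>j<n. B i k j) = 1"
  and Bcol: "\<forall>i<m. \<forall>j<n. (\<Sum>k<n. B i k j) = 1"
  shows "(\<Sum>k<n. log_ratio (\<Sum>i<m. w i * (\<Sum>j<n. B i k j * d i j))) \<le> (\<Sum>i<m. w i * (\<Sum>j<n. log_ratio (d i j)))"
proof (cases "n = 0")
  case True thus ?thesis by simp
next
  case False
  hence n: "n > 0" by simp
  have a01: "0 \<le> (\<Sum>j<n. B i k j * d i j) \<and> (\<Sum>j<n. B i k j * d i j) < 1" if "i < m" "k < n" for i k
    using convex_comb_in_unit_interval[OF n, of "B i k" "d i"] Brow Bnn d that by auto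
  have step: "log_ratio (\<Sum>i<m. w i * (\<Sum>j<n. B i k j * d i j)) \<le> (\<Sum>i<m. w i * (\<Sum>j<n. B i k j * log_ratio (d i j)))"
    if k: "k < n" for k
  proof -
    have "log_ratio (\<Sum>i<m. w i * (\<Sum>j<n. B i k j * d i j)) \<le> (\<Sum>i<m. w i * log_ratio (\<Sum>j<n. B i k j * d i j))"
      using wpos wsum a01 k m by (intro log_ratio_jensen, auto intro: less_imp_le)
    also have "\<dots> \<le> (\<Sum>i<m. w i * (\<Sum>j<n. B i k j * log_ratio (d i j)))"
    proof (intro sum_mono mult_left_mono)
      fix i assume i: "i \<in> {..<m}"
      show "log_ratio (\<Sum>j<n. B i k j * d i j) \<le> (\<Sum>j<n. B i k j * log_ratio (d i j))"
        using Brow Bnn d i k n by (intro log_ratio_jensen, auto)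
      show "0 \<le> w i" using wpos i by (auto intro: less_imp_le)
    qed
    finally show ?thesis .
  qed
  have "(\<Sum>k<n. log_ratio (\<Sum>i<m. w i * (\<Sum>j<n. B i k j * d i j)))
      \<le> (\<Sum>k<n. \<Sum>i<m. w i * (\<Sum>j<n. B i k j * log_ratio (d i j)))"
    using step by (intro sum_mono, auto)
  also have "\<dots> = (\<Sum>i<m. \<Sum>k<n. w i * (\<Sum>j<n. B i k j * log_ratio (d i j)))" by (rule sum.swap)
  also have "\<dots> = (\<Sum>i<m. w i * (\<Sum>j<n. (\<Sum>k<n. B i k j) * log_ratio (d i j)))"
  proof (intro sum.cong refl)
    fix i assume i: "i \<in> {..<m}"
    have "(\<Sum>k<n. w i * (\<Sum>j<n. B i k j * log_ratio (d i j))) = w i * (\<Sum>k<n. \<Sum>j<n. B i k j * log_ratio (d i j))"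
      by (simp add: sum_distrib_left)
    also have "(\<Sum>k<n. \<Sum>j<n. B i k j * log_ratio (d i j)) = (\<Sum>j<n. \<Sum>k<n. B i k j * log_ratio (d i j))" by (rule sum.swap)
    also have "\<dots> = (\<Sum>j<n. (\<Sum>k<n. B i k j) * log_ratio (d i j))" by (simp add: sum_distrib_right)
    finally show "(\<Sum>k<n. w i * (\<Sum>j<n. B i k j * log_ratio (d i j))) = w i * (\<Sum>j<n. (\<Sum>k<n. B i k j) * log_ratio (d i j))" .
  qed
  also have "\<dots> = (\<Sum>i<m. w i * (\<Sum>j<n. log_ratio (d i j)))" using Bcol by simp
  finally show ?thesis .
qed

lemma sum_log_ratio_eq_ln: fixes n :: nat assumes "\<forall>k<n. 0 \<le> d k \<and> d k < 1"
  shows "(\<Sum>k<n. log_ratio (d k)) = ln (\<Prod>k<n. 1 + d k) - ln (\<Prod>k<n. 1 - d k)"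
proof -
  have "ln (\<Prod>k<n. 1 + d k) = (\<Sum>k<n. ln (1 + d k))" using assms by (intro ln_prod, auto)
  moreover have "ln (\<Prod>k<n. 1 - d k) = (\<Sum>k<n. ln (1 - d k))" using assms by (intro ln_prod, auto)
  ultimately show ?thesis unfolding log_ratio_def by (simp add: sum_subtractf)
qed

lemma exp_sum_log_ratio: fixes n :: nat assumes "\<forall>k<n. 0 \<le> d k \<and> d k < 1"
  shows "exp (\<Sum>k<n. log_ratio (d k)) = (\<Prod>k<n. 1 + d k) / (\<Prod>k<n. 1 - d k)"
proof -
  have p1: "(\<Prod>k<n. 1 + d k) > 0" using assms by (intro prod_pos, auto)
  have p2: "(\<Prod>k<n. 1 - d k) > 0" using assms by (intro prod_pos, auto)
  show ?thesis unfolding sum_log_ratio_eq_ln[OF assms] using p1 p2 by (simp add: exp_diff)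
qed

lemma prod_powr_eq_exp_sum_log_ratio: fixes n m :: nat assumes r: "\<forall>i<m. \<forall>k<n. 0 \<le> r i k \<and> r i k < 1"
  shows "(\<Prod>k<n. \<Prod>i<m. ((1 + r i k) / (1 - r i k)) powr (w i)) = exp (\<Sum>i<m. w i * (\<Sum>k<n. log_ratio (r i k)))"
proof -
  have "(\<Prod>k<n. \<Prod>i<m. ((1 + r i k) / (1 - r i k)) powr (w i)) = (\<Prod>k<n. \<Prod>i<m. exp (w i * log_ratio (r i k)))"
  proof (intro prod.cong refl)
    fix k i assume "k \<in> {..<n}" "i \<in> {..<m}"
    hence b: "0 \<le> r i k" "r i k < 1" using r by auto
    have "((1 + r i k) / (1 - r i k)) powr (w i) = exp (w i * ln ((1 + r i k) / (1 - r i k)))"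
      using b by (simp add: powr_def)
    also have "ln ((1 + r i k) / (1 - r i k)) = log_ratio (r i k)" unfolding log_ratio_def using b by (simp add: ln_div)
    finally show "((1 + r i k) / (1 - r i k)) powr (w i) = exp (w i * log_ratio (r i k))" .
  qed
  also have "\<dots> = exp (\<Sum>k<n. \<Sum>i<m. w i * log_ratio (r i k))" by (simp add: exp_sum)
  also have "(\<Sum>k<n. \<Sum>i<m. w i * log_ratio (r i k)) = (\<Sum>i<m. w i * (\<Sum>k<n. log_ratio (r i k)))"
    by (subst sum.swap, simp add: sum_distrib_left)
  finally show ?thesis .
qed

lemma sum_log_ratio_eq_of_eigenvalues:
  fixes n :: nat and d e :: "nat \<Rightarrow> real"
  assumes d: "\<forall>k<n. 0 \<le> d k \<and> d k < 1" and e: "\<forall>k<n. 0 \<le> e k \<and> e k < 1"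
    and de: "\<And>x. (\<Prod>k<n. x - complex_of_real (d k)) = (\<Prod>k<n. x - complex_of_real (e k))"
  shows "(\<Sum>k<n. log_ratio (d k)) = (\<Sum>k<n. log_ratio (e k))"
proof -
  have "complex_of_real (\<Prod>k<n. 1 - d k) = complex_of_real (\<Prod>k<n. 1 - e k)" using de[of 1] by simp
  hence p1: "(\<Prod>k<n. 1 - d k) = (\<Prod>k<n. 1 - e k)" by (simp only: of_real_eq_iff)
  have "(\<Prod>k<n. - (1 + complex_of_real (d k))) = (\<Prod>k<n. - (1 + complex_of_real (e k)))"
    using de[of "-1"] by (simp add: algebra_simps)
  hence "(-1)^n * (\<Prod>k<n. 1 + complex_of_real (d k)) = (-1)^n * (\<Prod>k<n. 1 + complex_of_real (e k))"
    by (simp only: prod_uminus_nat)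
  hence "complex_of_real (\<Prod>k<n. 1 + d k) = complex_of_real (\<Prod>k<n. 1 + e k)" by simp
  hence p2: "(\<Prod>k<n. 1 + d k) = (\<Prod>k<n. 1 + e k)" by (simp only: of_real_eq_iff)
  show ?thesis unfolding sum_log_ratio_eq_ln[OF d] sum_log_ratio_eq_ln[OF e] p1 p2 ..
qed

section \<open>The determinantal inequality\<close>

lemma abs_mat_spectral:
  assumes Z: "Z \<in> carrier_mat n n"
    and cp: "char_poly (abs_mat Z) = (\<Prod>k<n. [:- complex_of_real (r k), 1:])"
    and r: "\<forall>k<n. 0 \<le> r k \<and> r k < 1"
  shows "\<exists>V d. unitary_mat n V \<and> abs_mat Z = V * real_diag_mat n d * adj_mat V
    \<and> (\<forall>k<n. 0 \<le> d k \<and> d k < 1) \<and> (\<Sum>k<n. log_ratio (d k)) = (\<Sum>k<n. log_ratio (r k))"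
proof -
  have psd: "psd_mat n (abs_mat Z)" using abs_mat_psd_sqrt[OF Z] by simp
  obtain V d where V: "unitary_mat n V" and P: "abs_mat Z = V * real_diag_mat n d * adj_mat V"
    and d0: "\<forall>k<n. d k \<ge> 0" using psd_mat_spectral[OF psd] by blast
  have dr: "(\<Prod>k<n. x - complex_of_real (d k)) = (\<Prod>k<n. x - complex_of_real (r k))" for x
    using poly_char_poly_spectral[OF V P, of x] unfolding cp by (simp add: poly_prod)
  have d: "\<forall>k<n. 0 \<le> d k \<and> d k < 1"
  proof (intro allI impI conjI)
    fix j assume j: "j < n"
    show "0 \<le> d j" using d0 j by simp
    have "(\<Prod>k<n. complex_of_real (d j) - complex_of_real (r k)) = 0"
      unfolding dr[symmetric] using j by (intro prod_zero, auto)
    then obtain k where "k < n" "d j = r k" by auto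
    thus "d j < 1" using r by auto
  qed
  show ?thesis using V P d sum_log_ratio_eq_of_eigenvalues[OF d r dr] by blast
qed

lemma abs_mat_spectral_family:
  assumes Z: "\<And>i. i < m \<Longrightarrow> Z i \<in> carrier_mat n n"
    and cp: "\<And>i. i < m \<Longrightarrow> char_poly (abs_mat (Z i)) = (\<Prod>k<n. [:- complex_of_real (r i k), 1:])"
    and r: "\<And>i k. i < m \<Longrightarrow> k < n \<Longrightarrow> 0 \<le> r i k \<and> r i k < 1"
  obtains V d where "\<forall>i<m. unitary_mat n (V i)"
    and "\<forall>i<m. abs_mat (Z i) = V i * real_diag_mat n (d i) * adj_mat (V i)"
    and "\<forall>i<m. \<forall>k<n. 0 \<le> d i k \<and> d i k < 1"
    and "\<forall>i<m. (\<Sum>k<n. log_ratio (d i k)) = (\<Sum>k<n. log_ratio (r i k))"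
proof -
  let ?Q = "\<lambda>i V d. unitary_mat n V \<and> abs_mat (Z i) = V * real_diag_mat n d * adj_mat V
      \<and> (\<forall>k<n. 0 \<le> d k \<and> d k < 1) \<and> (\<Sum>k<n. log_ratio (d k)) = (\<Sum>k<n. log_ratio (r i k))"
  have "\<forall>i\<in>{..<m}. \<exists>V d. ?Q i V d" using abs_mat_spectral[OF Z cp] r by blast
  then obtain V where "\<forall>i\<in>{..<m}. \<exists>d. ?Q i (V i) d" by (rule bchoice[THEN exE])
  then obtain d where "\<forall>i\<in>{..<m}. ?Q i (V i) (d i)" by (rule bchoice[THEN exE])
  thus ?thesis by (intro that) auto
qed

lemma wsum_spectral_eigenvalue:
  assumes V: "\<forall>i<m. unitary_mat n (V i)" and P: "\<forall>i<m. P i = V i * real_diag_mat n (d i) * adj_mat (V i)"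
    and V0: "unitary_mat n V0" and W: "wsum_mat n m w P = V0 * real_diag_mat n s * adj_mat V0" and k: "k < n"
  shows "s k = (\<Sum>i<m. w i * (\<Sum>j<n. (cmod ((adj_mat (V i) *\<^sub>v (V0 *\<^sub>v unit_vec n k)) $ j))^2 * d i j))"
proof -
  let ?x = "V0 *\<^sub>v unit_vec n k"
  have "V0 \<in> carrier_mat n n" using V0 unitary_mat_carrier by auto
  hence x: "?x \<in> carrier_vec n" by simp
  have Pc: "\<forall>i<m. P i \<in> carrier_mat n n" using P V unitary_mat_carrier by (auto intro!: mult_mult_carrier_mat)
  have "complex_of_real (s k) = cinner ?x (wsum_mat n m w P *\<^sub>v ?x)"
    using cinner_unitary_col_spectral[OF V0 W k] by simp
  also have "\<dots> = (\<Sum>i<m. complex_of_real (w i) * cinner ?x (P i *\<^sub>v ?x))"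
    by (rule cinner_wsum_mat[OF Pc x])
  also have "\<dots> = (\<Sum>i<m. complex_of_real (w i) * complex_of_real (\<Sum>j<n. (cmod ((adj_mat (V i) *\<^sub>v ?x) $ j))^2 * d i j))"
  proof (intro sum.cong refl)
    fix i assume "i \<in> {..<m}"
    hence "unitary_mat n (V i)" "P i = V i * real_diag_mat n (d i) * adj_mat (V i)" using V P by auto
    thus "complex_of_real (w i) * cinner ?x (P i *\<^sub>v ?x)
        = complex_of_real (w i) * complex_of_real (\<Sum>j<n. (cmod ((adj_mat (V i) *\<^sub>v ?x) $ j))^2 * d i j)"
      using cinner_spectral[OF _ _ x] by (simp add: mult.commute)
  qed
  finally show ?thesis by (simp flip: of_real_mult of_real_sum)
qed

lemma wsum_spectrum_log_ratio_le:
  assumes m: "m > 0" and w_pos: "\<forall>i<m. w i > 0" and w_sum: "(\<Sum>i<m. w i) = 1"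
    and V: "\<forall>i<m. unitary_mat n (V i)" and P: "\<forall>i<m. P i = V i * real_diag_mat n (d i) * adj_mat (V i)"
    and d: "\<forall>i<m. \<forall>k<n. 0 \<le> d i k \<and> d i k < 1"
    and V0: "unitary_mat n V0" and W: "wsum_mat n m w P = V0 * real_diag_mat n s * adj_mat V0"
  shows "\<forall>k<n. 0 \<le> s k \<and> s k < 1"
    and "(\<Sum>k<n. log_ratio (s k)) \<le> (\<Sum>i<m. w i * (\<Sum>k<n. log_ratio (d i k)))"
proof -
  \<comment> \<open>\<open>s\<^sub>k = \<Sum>\<^sub>i w\<^sub>i \<Sum>\<^sub>j B\<^sub>i\<^sub>k\<^sub>j d\<^sub>i\<^sub>j\<close>, where each \<open>B\<^sub>i = (\<bar>(V\<^sub>i\<^sup>* V\<^sub>0)\<^sub>j\<^sub>k\<bar>\<^sup>2)\<close> is doubly stochastic.\<close>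
  define B where "B = (\<lambda>i k j. (cmod ((adj_mat (V i) *\<^sub>v (V0 *\<^sub>v unit_vec n k)) $ j))^2)"
  have s_expr: "s k = (\<Sum>i<m. w i * (\<Sum>j<n. B i k j * d i j))" if "k < n" for k
    unfolding B_def by (rule wsum_spectral_eigenvalue[OF V P V0 W that])
  have Bnn: "\<forall>i<m. \<forall>k<n. \<forall>j<n. B i k j \<ge> 0" unfolding B_def by simp
  have Brow: "\<forall>i<m. \<forall>k<n. (\<Sum>j<n. B i k j) = 1"
    unfolding B_def using unitary_transition_row_sum[OF _ V0] V by blast
  have Bcol: "\<forall>i<m. \<forall>j<n. (\<Sum>k<n. B i k j) = 1"
    unfolding B_def using unitary_transition_col_sum[OF _ V0] V by blast
  show "\<forall>k<n. 0 \<le> s k \<and> s k < 1"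
  proof (intro allI impI)
    fix k assume k: "k < n"
    have a01: "0 \<le> (\<Sum>j<n. B i k j * d i j) \<and> (\<Sum>j<n. B i k j * d i j) < 1" if i: "i < m" for i
      using convex_comb_in_unit_interval[of n "B i k" "d i"] k Brow Bnn d i by auto
    have "0 \<le> (\<Sum>i<m. w i * (\<Sum>j<n. B i k j * d i j))"
      using a01 w_pos by (intro sum_nonneg) (auto intro: less_imp_le)
    moreover have "(\<Sum>i<m. w i * (\<Sum>j<n. B i k j * d i j)) < (\<Sum>i<m. w i * 1)"
      using a01 w_pos m by (intro sum_strict_mono mult_strict_left_mono, auto)
    ultimately show "0 \<le> s k \<and> s k < 1" using s_expr[OF k] w_sum by simp
  qed
  have "(\<Sum>k<n. log_ratio (s k)) = (\<Sum>k<n. log_ratio (\<Sum>i<m. w i * (\<Sum>j<n. B i k j * d i j)))"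
    using s_expr by (intro sum.cong refl, auto)
  also have "\<dots> \<le> (\<Sum>i<m. w i * (\<Sum>j<n. log_ratio (d i j)))"
    using sum_log_ratio_doubly_stochastic_le[OF m w_pos w_sum d Bnn Brow Bcol] .
  finally show "(\<Sum>k<n. log_ratio (s k)) \<le> (\<Sum>i<m. w i * (\<Sum>k<n. log_ratio (d i k)))" .
qed

lemma det_one_minus_wsum_square_le:
  assumes m: "m > 0" and w_pos: "\<forall>i<m. w i > 0" and w_sum: "(\<Sum>i<m. w i) = 1"
    and V: "\<forall>i<m. unitary_mat n (V i)" and P: "\<forall>i<m. P i = V i * real_diag_mat n (d i) * adj_mat (V i)"
    and d: "\<forall>i<m. \<forall>k<n. 0 \<le> d i k \<and> d i k < 1"
    and V0: "unitary_mat n V0" and W: "wsum_mat n m w P = V0 * real_diag_mat n s * adj_mat V0"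
  shows "\<exists>r. det (1\<^sub>m n - wsum_mat n m w (\<lambda>i. P i * P i)) = complex_of_real r \<and> 0 < r
    \<and> r \<le> (\<Prod>k<n. 1 - s k) * (\<Prod>k<n. 1 + s k)
    \<and> (r = (\<Prod>k<n. 1 - s k) * (\<Prod>k<n. 1 + s k) \<longleftrightarrow> (\<forall>i<m. P i = wsum_mat n m w P))"
proof -
  let ?W = "wsum_mat n m w P" and ?S = "wsum_mat n m w (\<lambda>i. P i * P i)"
  have PH: "\<forall>i<m. P i \<in> carrier_mat n n \<and> adj_mat (P i) = P i"
    using P V unitary_mat_carrier hermitian_of_spectral by (auto intro!: mult_mult_carrier_mat)
  have Wc: "?W \<in> carrier_mat n n" and Sc: "?S \<in> carrier_mat n n" and WWc: "?W * ?W \<in> carrier_mat n n"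
    by auto
  \<comment> \<open>\<open>S - W\<^sup>2\<close> is a weighted variance, so \<open>0 < 1 - S \<le> 1 - W\<^sup>2\<close>.\<close>
  have pdX: "pd_mat n (1\<^sub>m n - ?S)"
    by (rule pd_one_minus_wsum_square[OF m w_pos w_sum V P d])
  have "(1\<^sub>m n - ?W * ?W) - (1\<^sub>m n - ?S) = ?S - ?W * ?W"
    using Sc WWc by (intro eq_matI, auto)
  hence "psd_mat n ((1\<^sub>m n - ?W * ?W) - (1\<^sub>m n - ?S))"
    using psd_wsum_square_minus_square[OF PH w_sum] w_pos by (simp add: less_imp_le)
  then obtain r ry where r: "det (1\<^sub>m n - ?S) = complex_of_real r" and ry: "det (1\<^sub>m n - ?W * ?W) = complex_of_real ry"
    and r0: "0 < r" and rry: "r \<le> ry" and req: "r = ry \<longrightarrow> 1\<^sub>m n - ?S = 1\<^sub>m n - ?W * ?W"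
    using det_pd_mat_le[OF pdX minus_carrier_mat[OF WWc]] by blast
  have "det (1\<^sub>m n - ?W * ?W) = (\<Prod>k<n. 1 - complex_of_real (s k) * complex_of_real (s k))"
    unfolding W unitary_conj_square[OF V0 mat_diag_dim] mat_diag_diag one_minus_unitary_conj_diag[OF V0]
    by (simp add: det_unitary_conj[OF V0] det_mat_diag)
  also have "\<dots> = complex_of_real ((\<Prod>k<n. 1 - s k) * (\<Prod>k<n. 1 + s k))"
    by (simp add: algebra_simps flip: prod.distrib)
  finally have ry_val: "ry = (\<Prod>k<n. 1 - s k) * (\<Prod>k<n. 1 + s k)" using ry by (simp only: of_real_eq_iff)
  have "r = ry \<longleftrightarrow> (\<forall>i<m. P i = ?W)"
  proof
    assume "r = ry"
    hence eq: "1\<^sub>m n - ?S = 1\<^sub>m n - ?W * ?W" using req by simp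
    have "?S = ?W * ?W"
    proof (rule eq_matI)
      fix a b assume "a < dim_row (?W * ?W)" "b < dim_col (?W * ?W)"
      hence "a < n" "b < n" using Wc by auto
      thus "?S $$ (a,b) = (?W * ?W) $$ (a,b)" using arg_cong[OF eq, of "\<lambda>X. X $$ (a,b)"] WWc by simp
    qed (use WWc in auto)
    thus "\<forall>i<m. P i = ?W" using wsum_square_eq_square_imp_eq[OF PH w_sum] w_pos by blast
  next
    assume "\<forall>i<m. P i = ?W"
    hence "?S = ?W * ?W" using wsum_mat_const[of m "\<lambda>i. P i * P i" "?W * ?W" w n] w_sum WWc by simp
    thus "r = ry" using r ry by simp
  qed
  thus ?thesis using r r0 rry ry_val by blast
qed

lemma det_ratio_le_exp_sum_log_ratio:
  assumes m: "m > 0" and w_pos: "\<forall>i<m. w i > 0" and w_sum: "(\<Sum>i<m. w i) = 1"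
    and V: "\<forall>i<m. unitary_mat n (V i)" and P: "\<forall>i<m. P i = V i * real_diag_mat n (d i) * adj_mat (V i)"
    and d: "\<forall>i<m. \<forall>k<n. 0 \<le> d i k \<and> d i k < 1"
    and V0: "unitary_mat n V0" and W: "wsum_mat n m w P = V0 * real_diag_mat n s * adj_mat V0"
    and U: "unitary_mat n U"
  defines "ratio \<equiv> Re (det (1\<^sub>m n - wsum_mat n m w (\<lambda>i. P i * P i)))
    / (cmod (det (1\<^sub>m n - U * wsum_mat n m w P)))^2"
  shows "ratio \<le> exp (\<Sum>k<n. log_ratio (s k))"
    and "ratio = exp (\<Sum>k<n. log_ratio (s k)) \<longleftrightarrow>
      (\<forall>i<m. P i = wsum_mat n m w P) \<and> cmod (det (1\<^sub>m n - U * wsum_mat n m w P)) = (\<Prod>k<n. 1 - s k)"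
proof -
  have s: "\<forall>k<n. 0 \<le> s k \<and> s k < 1" by (rule wsum_spectrum_log_ratio_le(1)[OF m w_pos w_sum V P d V0 W])
  obtain r where r: "det (1\<^sub>m n - wsum_mat n m w (\<lambda>i. P i * P i)) = complex_of_real r" and r0: "0 < r"
    and r_le: "r \<le> (\<Prod>k<n. 1 - s k) * (\<Prod>k<n. 1 + s k)"
    and r_eq: "r = (\<Prod>k<n. 1 - s k) * (\<Prod>k<n. 1 + s k) \<longleftrightarrow> (\<forall>i<m. P i = wsum_mat n m w P)"
    using det_one_minus_wsum_square_le[OF m w_pos w_sum V P d V0 W] by blast
  define Dp where "Dp = (\<Prod>k<n. 1 - s k)"
  define Dn where "Dn = cmod (det (1\<^sub>m n - U * wsum_mat n m w P))"
  have Dp0: "Dp > 0" unfolding Dp_def using s by (intro prod_pos, auto)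
  have DnDp: "Dn \<ge> Dp" unfolding Dn_def Dp_def
    using cmod_det_one_minus_mult_spectral_ge[OF U V0 W s] by simp
  have ratio: "ratio = r / Dn^2" unfolding ratio_def Dn_def r by simp
  have mid: "exp (\<Sum>k<n. log_ratio (s k)) = Dp * (\<Prod>k<n. 1 + s k) / Dp^2"
    unfolding exp_sum_log_ratio[OF s] Dp_def[symmetric] using Dp0 by (simp add: power2_eq_square)
  have le1: "r / Dn^2 \<le> r / Dp^2" using r0 Dp0 DnDp by (intro divide_left_mono mult_pos_pos power_mono, auto)
  have le2: "r / Dp^2 \<le> Dp * (\<Prod>k<n. 1 + s k) / Dp^2" using r_le Dp0 unfolding Dp_def
    by (intro divide_right_mono, auto)
  show "ratio \<le> exp (\<Sum>k<n. log_ratio (s k))" unfolding ratio mid using le1 le2 by linarith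
  have "r / Dn^2 = r / Dp^2 \<longleftrightarrow> Dn = Dp" using r0 Dp0 DnDp by (auto simp: power2_eq_iff_nonneg)
  moreover have "r / Dp^2 = Dp * (\<Prod>k<n. 1 + s k) / Dp^2 \<longleftrightarrow> r = Dp * (\<Prod>k<n. 1 + s k)" using Dp0 by auto
  ultimately show "ratio = exp (\<Sum>k<n. log_ratio (s k)) \<longleftrightarrow>
      (\<forall>i<m. P i = wsum_mat n m w P) \<and> cmod (det (1\<^sub>m n - U * wsum_mat n m w P)) = (\<Prod>k<n. 1 - s k)"
    unfolding ratio mid r_eq[symmetric, folded Dp_def] Dn_def[symmetric] Dp_def[symmetric] using le1 le2 by linarith
qed

lemma det_ratio_bound_spectral:
  assumes m: "m > 0" and w_pos: "\<forall>i<m. w i > 0" and w_sum: "(\<Sum>i<m. w i) = 1"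
    and V: "\<forall>i<m. unitary_mat n (V i)" and P: "\<forall>i<m. P i = V i * real_diag_mat n (d i) * adj_mat (V i)"
    and d: "\<forall>i<m. \<forall>k<n. 0 \<le> d i k \<and> d i k < 1" and U: "unitary_mat n U"
  defines "W \<equiv> wsum_mat n m w P"
    and "ratio \<equiv> Re (det (1\<^sub>m n - wsum_mat n m w (\<lambda>i. P i * P i)))
      / (cmod (det (1\<^sub>m n - U * wsum_mat n m w P)))^2"
    and "bound \<equiv> exp (\<Sum>i<m. w i * (\<Sum>k<n. log_ratio (d i k)))"
  shows "ratio \<le> bound"
    and "ratio = bound \<longleftrightarrow> (\<forall>i<m. P i = W) \<and> char_poly (U * W) = char_poly W"
    and "ratio = bound \<Longrightarrow> \<forall>i<m. det (P i) \<noteq> 0 \<Longrightarrow> U = 1\<^sub>m n"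
proof -
  have PH: "\<forall>i<m. P i \<in> carrier_mat n n \<and> adj_mat (P i) = P i"
    using P V unitary_mat_carrier hermitian_of_spectral by (auto intro!: mult_mult_carrier_mat)
  have Wc: "W \<in> carrier_mat n n" unfolding W_def by simp
  have Uc: "U \<in> carrier_mat n n" using U unitary_mat_carrier by auto
  have hW: "adj_mat W = W" unfolding W_def using PH by (rule wsum_mat_hermitian)
  obtain V0 s where V0: "unitary_mat n V0" and Wf: "W = V0 * real_diag_mat n s * adj_mat V0"
    using hermitian_spectral_decomposition[OF Wc hW] by blast
  note spec = wsum_spectrum_log_ratio_le[OF m w_pos w_sum V P d V0 Wf[unfolded W_def]]
  note mid = det_ratio_le_exp_sum_log_ratio[OF m w_pos w_sum V P d V0 Wf[unfolded W_def] U,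
    folded ratio_def, folded W_def]
  have mid_le: "exp (\<Sum>k<n. log_ratio (s k)) \<le> bound" unfolding bound_def using spec(2) by simp
  show le: "ratio \<le> bound" using mid(1) mid_le by linarith
  have UW: "cmod (det (1\<^sub>m n - U * W)) = (\<Prod>k<n. 1 - s k) \<Longrightarrow> U * W = W"
    using cmod_det_one_minus_mult_spectral_ge[OF U V0 Wf spec(1)] by blast
  have eq_UW: "ratio = bound \<Longrightarrow> U * W = W" using mid(1,2) mid_le UW by fastforce
  \<comment> \<open>Conversely, \<open>char_poly (U W)\<close> fixes \<open>det (1 - U W)\<close>, and if all \<open>P\<^sub>i = W\<close> Jensen's inequality is an equality.\<close>
  have "ratio = bound" if PW: "\<forall>i<m. P i = W" and cp: "char_poly (U * W) = char_poly W"
  proof -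
    have "det (1\<^sub>m n - U * W) = poly (char_poly W) 1"
      unfolding cp[symmetric] using Uc Wc by (intro det_one_minus_eq_char_poly, auto)
    also have "\<dots> = complex_of_real (\<Prod>k<n. 1 - s k)" using poly_char_poly_spectral[OF V0 Wf, of 1] by simp
    finally have "cmod (det (1\<^sub>m n - U * W)) = \<bar>\<Prod>k<n. 1 - s k\<bar>" by (simp only: norm_of_real)
    also have "\<dots> = (\<Prod>k<n. 1 - s k)" using spec(1) by (intro abs_of_nonneg prod_nonneg) auto
    finally have "cmod (det (1\<^sub>m n - U * W)) = (\<Prod>k<n. 1 - s k)" .
    hence "ratio = exp (\<Sum>k<n. log_ratio (s k))" using mid(2) PW unfolding W_def by simp
    moreover have "(\<Sum>k<n. log_ratio (d i k)) = (\<Sum>k<n. log_ratio (s k))" if i: "i < m" for i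
      using sum_log_ratio_eq_of_eigenvalues[of n "d i" s] d spec(1) i
        poly_char_poly_spectral[OF V0 Wf] poly_char_poly_spectral[of n "V i" W "d i"] V P PW by auto
    ultimately show ?thesis unfolding bound_def using w_sum by (simp add: sum_distrib_right[symmetric])
  qed
  moreover have PW: "ratio = bound \<Longrightarrow> \<forall>i<m. P i = W"
    using mid(1,2) mid_le unfolding W_def by fastforce
  ultimately show "ratio = bound \<longleftrightarrow> (\<forall>i<m. P i = W) \<and> char_poly (U * W) = char_poly W"
    using eq_UW by auto
  assume eq: "ratio = bound" and nz: "\<forall>i<m. det (P i) \<noteq> 0"
  have "P 0 = W" using PW[OF eq] m by blast
  hence "det W \<noteq> 0" using nz m by metis
  thus "U = 1\<^sub>m n" by (rule mult_right_cancel_invertible[OF Wc _ Uc eq_UW[OF eq]])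
qed

theorem corollary7:
  fixes n m :: nat and Z :: "nat \<Rightarrow> complex mat" and r :: "nat \<Rightarrow> nat \<Rightarrow> real"
    and U :: "complex mat" and w :: "nat \<Rightarrow> real"
  assumes Zc: "\<And>i. i < m \<Longrightarrow> Z i \<in> carrier_mat n n"
    and sv: "\<And>i. i < m \<Longrightarrow> char_poly (abs_mat (Z i)) = (\<Prod>k<n. [:- complex_of_real (r i k), 1:])"
    and r_bnd: "\<And>i k. i < m \<Longrightarrow> k < n \<Longrightarrow> 0 \<le> r i k \<and> r i k < 1"
    and U_unit: "unitary_mat n U"
    and w_pos: "\<And>i. i < m \<Longrightarrow> w i > 0"
    and w_sum: "(\<Sum>i<m. w i) = 1"
  defines "LHS \<equiv> Re (det (1\<^sub>m n - wsum_mat n m w (\<lambda>i. adj_mat (Z i) * Z i)))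
                   / (cmod (det (1\<^sub>m n - U * wsum_mat n m w (\<lambda>i. abs_mat (Z i))))) ^ 2"
    and "RHS \<equiv> (\<Prod>k<n. \<Prod>i<m. ((1 + r i k) / (1 - r i k)) powr (w i))"
  shows "LHS \<le> RHS \<and>
         (LHS = RHS \<longleftrightarrow>
           (\<exists>Z0. (\<forall>i<m. abs_mat (Z i) = Z0) \<and> char_poly (U * Z0) = char_poly Z0)) \<and>
         (LHS = RHS \<longrightarrow> (\<forall>i<m. det (abs_mat (Z i)) \<noteq> 0) \<longrightarrow> U = 1\<^sub>m n)"
proof -
  have m: "m > 0" using w_sum by (cases m) auto
  obtain V d where V: "\<forall>i<m. unitary_mat n (V i)"
    and Zd: "\<forall>i<m. abs_mat (Z i) = V i * real_diag_mat n (d i) * adj_mat (V i)"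
    and d: "\<forall>i<m. \<forall>k<n. 0 \<le> d i k \<and> d i k < 1"
    and dr: "\<forall>i<m. (\<Sum>k<n. log_ratio (d i k)) = (\<Sum>k<n. log_ratio (r i k))"
    by (rule abs_mat_spectral_family[OF Zc sv r_bnd])
  have "wsum_mat n m w (\<lambda>i. adj_mat (Z i) * Z i) = wsum_mat n m w (\<lambda>i. abs_mat (Z i) * abs_mat (Z i))"
    using abs_mat_psd_sqrt[OF Zc] by (intro eq_matI) (auto simp: wsum_mat_index)
  hence LHS: "LHS = Re (det (1\<^sub>m n - wsum_mat n m w (\<lambda>i. abs_mat (Z i) * abs_mat (Z i))))
      / (cmod (det (1\<^sub>m n - U * wsum_mat n m w (\<lambda>i. abs_mat (Z i)))))^2"
    unfolding LHS_def by simp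
  have RHS: "RHS = exp (\<Sum>i<m. w i * (\<Sum>k<n. log_ratio (d i k)))"
    unfolding RHS_def using prod_powr_eq_exp_sum_log_ratio[of m n r w] r_bnd dr by simp
  have "\<forall>i<m. w i > 0" using w_pos by blast
  note main = det_ratio_bound_spectral[OF m this w_sum V Zd d U_unit, folded LHS RHS]
  have "\<forall>i<m. abs_mat (Z i) \<in> carrier_mat n n" using abs_mat_psd_sqrt[OF Zc] psd_matD by blast
  note ex_iff = ex_const_iff_wsum_mat[OF m w_sum this, of "\<lambda>Z0. char_poly (U * Z0) = char_poly Z0"]
  show ?thesis using main unfolding ex_iff by blast
qed

end
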